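(* Consider the bounded overflow sharing model in the following scaling regime, indexed by $N\to\infty$: for fixed $\alpha_1,\alpha_2>0$, $\beta_1,\beta_2\in\mathbb{R}$, $\gamma_1,\gamma_2\ge 0$, $N_i=\alpha_iN$, $a_i=N_i+\beta_i\sqrt{N_i}+o(\sqrt{N_i})$, $k_i=\gamma_i\sqrt{N_i}+o(\sqrt{N_i})$ for $i=1,2$. Then, for $i\in\{1,2\}$, as $N\to\infty$, $$B_i^{(bo)}(k_1,k_2)\sim\frac{1}{\sqrt N}\,\frac{\tilde A_i}{\tilde G},$$ where $$\tilde A_i=\frac{\phi\!\left(\gamma_{-i}\sqrt{\alpha_{-i}/\alpha_i}-\beta_i\right)}{\sqrt{\alpha_i}}\,\Phi(-\gamma_{-i}-\beta_{-i})+\frac{1}{\sqrt{\alpha_1\alpha_2}}\int_{-\gamma_1\sqrt{\alpha_1}}^{\gamma_2\sqrt{\alpha_2}}\phi\!\left(\frac{x}{\sqrt{\alpha_1}}-\beta_1\right)\phi\!\left(\frac{-x}{\sqrt{\alpha_2}}-\beta_2\right)dx,$$ $$\tilde G=\Phi\!\left(\gamma_1\sqrt{\alpha_1/\alpha_2}-\beta_2\right)\Phi(-\gamma_1-\beta_1)+\frac{1}{\sqrt{\alpha_1}}\int_{-\gamma_1\sqrt{\alpha_1}}^{\gamma_2\sqrt{\alpha_2}}\phi\!\left(\frac{x}{\sqrt{\alpha_1}}-\beta_1\right)\Phi\!\left(\frac{-x}{\sqrt{\alpha_2}}-\beta_2\right)dx.$$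
   Context: Two service providers $P_1,P_2$. Provider $P_i$ has $N_i$ servers (a positive integer); its calls arrive as a Poisson process of rate $\lambda_i>0$ with i.i.d. holding times of mean $1/\mu_i<\infty$, all independent; offered load $a_i=\lambda_i/\mu_i$. $-i$ denotes the index other than $i$. $n_i$ is the number of active calls of $P_i$; calls are not attached to specific servers (call repacking). Bounded overflow model with parameter $(k_1,k_2)$, $k_i\in[0,N_i]$, $\{k\}=k-\lfloor k\rfloor$: an arriving call of $P_{-i}$ is admitted if $n_{-i}<N_{-i}+\lfloor k_i\rfloor$ and $n_1+n_2<N_1+N_2$; admitted with probability $\{k_i\}$ if $n_{-i}=N_{-i}+\lfloor k_i\rfloor$ and $n_1+n_2<N_1+N_2$; otherwise blocked. $B_i^{(bo)}(k_1,k_2)$ is the steady-state probability that an arriving call of $P_i$ is blocked. $\phi$ and $\Phi$ are the standard Gaussian density and distribution function; $f\sim g$ means $f/g\to 1$. *)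

theory Defs
  imports "HOL-Probability.Probability" "HOL-Library.Landau_Symbols"
begin

text \<open>Standard Gaussian density phi is the library's std_normal_density; Phi is its distribution function.\<close>
definition Phi :: "real \<Rightarrow> real" where
  "Phi x = (LBINT t:{..x}. std_normal_density t)"

text \<open>Bounded overflow model. States are pairs (n1, n2) of active calls.
  Parameters: N1 N2 (servers), k1 k2 (overflow bounds), l1 l2 (arrival rates), u1 u2 (service rates).\<close>

definition bo_states :: "nat \<Rightarrow> nat \<Rightarrow> (nat \<times> nat) set" where
  "bo_states N1 N2 = {(n1, n2). n1 + n2 \<le> N1 + N2}"

text \<open>Admission probability of an arriving call of P1 in state (n1,n2):
  P1 = P_{-2}, so its bound uses k2.\<close>
definition bo_adm1 :: "nat \<Rightarrow> nat \<Rightarrow> real \<Rightarrow> real \<Rightarrow> nat \<times> nat \<Rightarrow> real" where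
  "bo_adm1 N1 N2 k1 k2 s =
     (if fst s + snd s < N1 + N2 then
        (if int (fst s) < int N1 + \<lfloor>k2\<rfloor> then 1
         else if int (fst s) = int N1 + \<lfloor>k2\<rfloor> then frac k2 else 0)
      else 0)"

definition bo_adm2 :: "nat \<Rightarrow> nat \<Rightarrow> real \<Rightarrow> real \<Rightarrow> nat \<times> nat \<Rightarrow> real" where
  "bo_adm2 N1 N2 k1 k2 s =
     (if fst s + snd s < N1 + N2 then
        (if int (snd s) < int N2 + \<lfloor>k1\<rfloor> then 1
         else if int (snd s) = int N2 + \<lfloor>k1\<rfloor> then frac k1 else 0)
      else 0)"

text \<open>Transition rate from state x to state y (x \<noteq> y) of the CTMC (with call repacking).\<close>
definition bo_rate :: "nat \<Rightarrow> nat \<Rightarrow> real \<Rightarrow> real \<Rightarrow> real \<Rightarrow> real \<Rightarrow> real \<Rightarrow> real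
    \<Rightarrow> nat \<times> nat \<Rightarrow> nat \<times> nat \<Rightarrow> real" where
  "bo_rate N1 N2 k1 k2 l1 l2 u1 u2 x y =
     (if y = (Suc (fst x), snd x) then l1 * bo_adm1 N1 N2 k1 k2 x else 0)
   + (if y = (fst x, Suc (snd x)) then l2 * bo_adm2 N1 N2 k1 k2 x else 0)
   + (if 0 < fst x \<and> y = (fst x - 1, snd x) then real (fst x) * u1 else 0)
   + (if 0 < snd x \<and> y = (fst x, snd x - 1) then real (snd x) * u2 else 0)"

definition bo_stationary :: "nat \<Rightarrow> nat \<Rightarrow> real \<Rightarrow> real \<Rightarrow> real \<Rightarrow> real \<Rightarrow> real \<Rightarrow> real
    \<Rightarrow> (nat \<times> nat \<Rightarrow> real) \<Rightarrow> bool" where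
  "bo_stationary N1 N2 k1 k2 l1 l2 u1 u2 p \<longleftrightarrow>
     (\<forall>x. 0 \<le> p x) \<and> (\<forall>x. x \<notin> bo_states N1 N2 \<longrightarrow> p x = 0) \<and>
     (\<Sum>x\<in>bo_states N1 N2. p x) = 1 \<and>
     (\<forall>x\<in>bo_states N1 N2.
        p x * (\<Sum>y\<in>bo_states N1 N2 - {x}. bo_rate N1 N2 k1 k2 l1 l2 u1 u2 x y)
        = (\<Sum>y\<in>bo_states N1 N2 - {x}. p y * bo_rate N1 N2 k1 k2 l1 l2 u1 u2 y x))"

definition bo_pi :: "nat \<Rightarrow> nat \<Rightarrow> real \<Rightarrow> real \<Rightarrow> real \<Rightarrow> real \<Rightarrow> real \<Rightarrow> real
    \<Rightarrow> nat \<times> nat \<Rightarrow> real" where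
  "bo_pi N1 N2 k1 k2 l1 l2 u1 u2 = (THE p. bo_stationary N1 N2 k1 k2 l1 l2 u1 u2 p)"

text \<open>Blocking probability seen by an arriving call (Poisson arrivals see time averages).\<close>
definition B1_bo :: "nat \<Rightarrow> nat \<Rightarrow> real \<Rightarrow> real \<Rightarrow> real \<Rightarrow> real \<Rightarrow> real \<Rightarrow> real \<Rightarrow> real" where
  "B1_bo N1 N2 k1 k2 l1 l2 u1 u2 =
     (\<Sum>x\<in>bo_states N1 N2. bo_pi N1 N2 k1 k2 l1 l2 u1 u2 x * (1 - bo_adm1 N1 N2 k1 k2 x))"

definition B2_bo :: "nat \<Rightarrow> nat \<Rightarrow> real \<Rightarrow> real \<Rightarrow> real \<Rightarrow> real \<Rightarrow> real \<Rightarrow> real \<Rightarrow> real" where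
  "B2_bo N1 N2 k1 k2 l1 l2 u1 u2 =
     (\<Sum>x\<in>bo_states N1 N2. bo_pi N1 N2 k1 k2 l1 l2 u1 u2 x * (1 - bo_adm2 N1 N2 k1 k2 x))"

end

(* The two-provider chain with call repacking is reversible: detailed balance holds for the
   product weight pi(n1,n2) ~ w1(n1) w2(n2) on {n1 + n2 <= N1 + N2}, where w_i is the Poisson(a_i)
   weight cut off at the overflow bound of provider i, and a maximum principle shows that it is the
   only stationary distribution.  So B_1 is an explicit ratio of sums: the mass of the full states
   n1 + n2 = N1 + N2 plus the mass at the overflow bound of provider 1, divided by the total mass.
   In the square-root regime a local limit theorem for the Poisson weights,
   a_i^n / n! ~ phi((n - N_i) / sqrt N_i - beta_i), together with the uniform bound
   exp (- |n - N_i| / (2 sqrt N_i)), turns each rescaled sum into a Gaussian integral by dominated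
   convergence; the integrals are the constants of the theorem.  B_2 is B_1 with the providers
   exchanged. *)

theory Submission
  imports Defs
begin

section \<open>Product-form stationary distribution\<close>

definition adm_prob :: "real \<Rightarrow> nat \<Rightarrow> nat \<Rightarrow> real" where
  "adm_prob k N n = (if int n < int N + \<lfloor>k\<rfloor> then 1 else if int n = int N + \<lfloor>k\<rfloor> then frac k else 0)"

fun adm_weight :: "real \<Rightarrow> nat \<Rightarrow> nat \<Rightarrow> real" where
  "adm_weight k N 0 = 1"
| "adm_weight k N (Suc n) = adm_weight k N n * adm_prob k N n"

lemma adm_prob_nonneg: "0 \<le> adm_prob k N n"
  by (auto simp: adm_prob_def frac_ge_0)

lemma adm_prob_le_1: "adm_prob k N n \<le> 1"
  by (auto simp: adm_prob_def less_imp_le[OF frac_lt_1])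

lemma adm_weight_nonneg: "0 \<le> adm_weight k N n"
  by (induction n) (auto simp: adm_prob_nonneg)

lemma adm_weight_le_1: "adm_weight k N n \<le> 1"
  by (induction n) (auto intro: mult_le_one simp: adm_prob_nonneg adm_prob_le_1 adm_weight_nonneg)

lemma adm_prob_nat:
  assumes "0 \<le> k"
  shows "adm_prob k N n = (if n < N + nat \<lfloor>k\<rfloor> then 1 else if n = N + nat \<lfloor>k\<rfloor> then frac k else 0)"
proof -
  have e: "int N + \<lfloor>k\<rfloor> = int (N + nat \<lfloor>k\<rfloor>)" using assms by simp
  show ?thesis unfolding adm_prob_def e of_nat_less_iff of_nat_eq_iff by simp
qed

lemma adm_weight_eq:
  assumes "0 \<le> k"
  shows "adm_weight k N n = (if n \<le> N + nat \<lfloor>k\<rfloor> then 1 else if n = N + nat \<lfloor>k\<rfloor> + 1 then frac k else 0)"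
  by (induction n) (auto simp: adm_prob_nat[OF assms])

lemma adm_weight_eq_1: "0 \<le> k \<Longrightarrow> n \<le> N + nat \<lfloor>k\<rfloor> \<Longrightarrow> adm_weight k N n = 1"
  by (simp add: adm_weight_eq)

lemma adm_weight_eq_0: "0 \<le> k \<Longrightarrow> N + nat \<lfloor>k\<rfloor> + 2 \<le> n \<Longrightarrow> adm_weight k N n = 0"
  by (simp add: adm_weight_eq)

lemma adm_weight_pos_mono: "0 < adm_weight k N n \<Longrightarrow> m \<le> n \<Longrightarrow> 0 < adm_weight k N m"
proof (induction n arbitrary: m)
  case (Suc n)
  then show ?case
    using adm_weight_nonneg[of k N n] adm_prob_nonneg[of k N n]
    by (auto simp: le_Suc_eq zero_less_mult_iff)
qed simp

lemma adm_weight_eq_0_imp_adm_prob: "adm_weight k N n = 0 \<Longrightarrow> \<exists>j. n = Suc j \<and> adm_prob k N j = 0"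
proof (induction n)
  case (Suc n)
  show ?case
  proof (cases "adm_prob k N n = 0")
    case False
    with Suc obtain j where "n = Suc j" "adm_prob k N j = 0" by auto
    then have "adm_prob k N n = 0" by (auto simp: adm_prob_def split: if_splits)
    with False show ?thesis by simp
  qed simp
qed simp

lemma bo_adm1_eq: "bo_adm1 N1 N2 k1 k2 s = (if fst s + snd s < N1 + N2 then adm_prob k2 N1 (fst s) else 0)"
  by (simp add: bo_adm1_def adm_prob_def)

lemma bo_adm2_eq: "bo_adm2 N1 N2 k1 k2 s = (if fst s + snd s < N1 + N2 then adm_prob k1 N2 (snd s) else 0)"
  by (simp add: bo_adm2_def adm_prob_def)

lemma bo_rate_up1: "bo_rate N1 N2 k1 k2 l1 l2 u1 u2 (a,b) (Suc a, b) = l1 * bo_adm1 N1 N2 k1 k2 (a,b)"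
  by (auto simp: bo_rate_def)

lemma bo_rate_up2: "bo_rate N1 N2 k1 k2 l1 l2 u1 u2 (a,b) (a, Suc b) = l2 * bo_adm2 N1 N2 k1 k2 (a,b)"
  by (auto simp: bo_rate_def)

lemma bo_rate_down1: "bo_rate N1 N2 k1 k2 l1 l2 u1 u2 (Suc a, b) (a, b) = real (Suc a) * u1"
  by (simp add: bo_rate_def)

lemma bo_rate_down2: "bo_rate N1 N2 k1 k2 l1 l2 u1 u2 (a, Suc b) (a, b) = real (Suc b) * u2"
  by (simp add: bo_rate_def)

definition class_weight :: "real \<Rightarrow> real \<Rightarrow> nat \<Rightarrow> nat \<Rightarrow> real" where
  "class_weight a k N n = a ^ n / fact n * adm_weight k N n"

definition bo_weight :: "nat \<Rightarrow> nat \<Rightarrow> real \<Rightarrow> real \<Rightarrow> real \<Rightarrow> real \<Rightarrow> nat \<times> nat \<Rightarrow> real" where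
  "bo_weight N1 N2 k1 k2 a1 a2 x =
     (if fst x + snd x \<le> N1 + N2 then class_weight a1 k2 N1 (fst x) * class_weight a2 k1 N2 (snd x) else 0)"

definition bo_norm :: "nat \<Rightarrow> nat \<Rightarrow> real \<Rightarrow> real \<Rightarrow> real \<Rightarrow> real \<Rightarrow> real" where
  "bo_norm N1 N2 k1 k2 a1 a2 = (\<Sum>x\<in>bo_states N1 N2. bo_weight N1 N2 k1 k2 a1 a2 x)"

lemma finite_bo_states: "finite (bo_states N1 N2)"
  by (rule finite_subset[of _ "{..N1+N2} \<times> {..N1+N2}"]) (auto simp: bo_states_def)

lemma class_weight_nonneg: "0 < a \<Longrightarrow> 0 \<le> class_weight a k N n"
  by (simp add: class_weight_def adm_weight_nonneg)

lemma class_weight_pos_iff: "0 < a \<Longrightarrow> 0 < class_weight a k N n \<longleftrightarrow> 0 < adm_weight k N n"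
proof -
  assume "0 < a"
  then have "0 < a ^ n / fact n" by simp
  then show ?thesis unfolding class_weight_def by (simp only: zero_less_mult_iff) auto
qed

lemma class_weight_Suc: "class_weight a k N (Suc n) * real (Suc n) = a * class_weight a k N n * adm_prob k N n"
proof -
  have "(fact (Suc n) :: real) = real (Suc n) * fact n" by simp
  then show ?thesis unfolding class_weight_def adm_weight.simps power_Suc
    by (simp add: field_simps del: of_nat_Suc)
qed

locale bo_chain =
  fixes N1 N2 :: nat and k1 k2 l1 l2 u1 u2 :: real
  assumes pos: "0 < l1" "0 < l2" "0 < u1" "0 < u2"
begin

abbreviation "S \<equiv> bo_states N1 N2"
abbreviation "q \<equiv> bo_rate N1 N2 k1 k2 l1 l2 u1 u2"
abbreviation "W \<equiv> bo_weight N1 N2 k1 k2 (l1/u1) (l2/u2)"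
abbreviation "Z \<equiv> bo_norm N1 N2 k1 k2 (l1/u1) (l2/u2)"

lemma bo_rate_nonneg: "0 \<le> q x y"
  unfolding bo_rate_def bo_adm1_eq bo_adm2_eq
  by (intro add_nonneg_nonneg) (simp_all add: adm_prob_nonneg pos less_imp_le)

lemma bo_weight_nonneg: "0 \<le> W x"
  unfolding bo_weight_def using pos by (simp add: class_weight_nonneg)

lemma bo_weight_pos_iff:
  "0 < W (a,b) \<longleftrightarrow> a + b \<le> N1 + N2 \<and> 0 < adm_weight k2 N1 a \<and> 0 < adm_weight k1 N2 b"
  using pos class_weight_nonneg[of "l1/u1" k2 N1 a] class_weight_nonneg[of "l2/u2" k1 N2 b]
    class_weight_pos_iff[of "l1/u1" k2 N1 a] class_weight_pos_iff[of "l2/u2" k1 N2 b]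
  by (auto simp: bo_weight_def zero_less_mult_iff)

lemma bo_weight_origin: "W (0,0) = 1"
  by (simp add: bo_weight_def class_weight_def)

lemma bo_weight_outside: "x \<notin> S \<Longrightarrow> W x = 0"
  by (auto simp: bo_weight_def bo_states_def)

lemma origin_in_bo_states: "(0,0) \<in> S"
  by (simp add: bo_states_def)

lemma bo_norm_pos: "0 < Z"
proof -
  have "W (0,0) \<le> Z" unfolding bo_norm_def
    by (rule member_le_sum) (auto simp: origin_in_bo_states bo_weight_nonneg finite_bo_states)
  then show ?thesis using bo_weight_origin by simp
qed

lemma detailed_balance_step1:
  assumes "(Suc a, b) \<in> S"
  shows "W (a,b) * q (a,b) (Suc a, b) = W (Suc a, b) * q (Suc a, b) (a,b)"
proof -
  have lt: "a + b < N1 + N2" using assms by (simp add: bo_states_def)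
  have q1: "q (a,b) (Suc a, b) = l1 * adm_prob k2 N1 a" using lt by (simp add: bo_rate_up1 bo_adm1_eq)
  have q2: "q (Suc a, b) (a,b) = real (Suc a) * u1" by (rule bo_rate_down1)
  have "W (Suc a, b) * q (Suc a, b) (a,b)
      = class_weight (l2/u2) k1 N2 b * u1 * (class_weight (l1/u1) k2 N1 (Suc a) * real (Suc a))"
    using lt unfolding q2 by (simp add: bo_weight_def ac_simps)
  also have "\<dots> = W (a,b) * q (a,b) (Suc a, b)"
    using lt pos unfolding class_weight_Suc q1 by (simp add: bo_weight_def field_simps)
  finally show ?thesis by simp
qed

lemma detailed_balance_step2:
  assumes "(a, Suc b) \<in> S"
  shows "W (a,b) * q (a,b) (a, Suc b) = W (a, Suc b) * q (a, Suc b) (a,b)"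
proof -
  have lt: "a + b < N1 + N2" using assms by (simp add: bo_states_def)
  have q1: "q (a,b) (a, Suc b) = l2 * adm_prob k1 N2 b" using lt by (simp add: bo_rate_up2 bo_adm2_eq)
  have q2: "q (a, Suc b) (a,b) = real (Suc b) * u2" by (rule bo_rate_down2)
  have "W (a, Suc b) * q (a, Suc b) (a,b)
      = class_weight (l1/u1) k2 N1 a * u2 * (class_weight (l2/u2) k1 N2 (Suc b) * real (Suc b))"
    using lt unfolding q2 by (simp add: bo_weight_def ac_simps)
  also have "\<dots> = W (a,b) * q (a,b) (a, Suc b)"
    using lt pos unfolding class_weight_Suc q1 by (simp add: bo_weight_def field_simps)
  finally show ?thesis by simp
qed

lemma bo_rate_eq_0_nonadjacent:
  assumes "y \<noteq> (Suc (fst x), snd x)" "y \<noteq> (fst x, Suc (snd x))"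
    "x \<noteq> (Suc (fst y), snd y)" "x \<noteq> (fst y, Suc (snd y))"
  shows "q x y = 0"
proof -
  have h3: "\<not> (0 < fst x \<and> y = (fst x - 1, snd x))" and h4: "\<not> (0 < snd x \<and> y = (fst x, snd x - 1))"
    using assms(3,4) by auto
  show ?thesis unfolding bo_rate_def
    by (simp only: if_not_P[OF assms(1)] if_not_P[OF assms(2)] if_not_P[OF h3] if_not_P[OF h4] add_0)
qed

lemma detailed_balance:
  assumes "x \<in> S" "y \<in> S"
  shows "W x * q x y = W y * q y x"
proof -
  obtain a b c d where xy: "x = (a,b)" "y = (c,d)" by (cases x; cases y)
  show ?thesis
  proof (cases "y = (Suc a, b) \<or> x = (Suc c, d) \<or> y = (a, Suc b) \<or> x = (c, Suc d)")
    case True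
    then show ?thesis
      using assms xy detailed_balance_step1[of a b] detailed_balance_step1[of c d]
        detailed_balance_step2[of a b] detailed_balance_step2[of c d] by auto
  next
    case False
    then show ?thesis using bo_rate_eq_0_nonadjacent[of x y] bo_rate_eq_0_nonadjacent[of y x] xy by auto
  qed
qed

lemma bo_stationary_bo_weight: "bo_stationary N1 N2 k1 k2 l1 l2 u1 u2 (\<lambda>x. W x / Z)"
  unfolding bo_stationary_def
proof (intro conjI allI impI ballI)
  show "0 \<le> W x / Z" for x using bo_weight_nonneg bo_norm_pos by simp
  show "x \<notin> S \<Longrightarrow> W x / Z = 0" for x by (simp add: bo_weight_outside)
  show "(\<Sum>x\<in>S. W x / Z) = 1"
    using bo_norm_pos unfolding bo_norm_def by (simp add: sum_divide_distrib[symmetric])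
  fix x assume x: "x \<in> S"
  have "W x / Z * (\<Sum>y\<in>S - {x}. q x y) = (\<Sum>y\<in>S - {x}. W x * q x y / Z)"
    by (simp add: sum_distrib_left)
  also have "\<dots> = (\<Sum>y\<in>S - {x}. W y / Z * q y x)"
    by (rule sum.cong) (use x detailed_balance in auto)
  finally show "W x / Z * (\<Sum>y\<in>S - {x}. q x y) = (\<Sum>y\<in>S - {x}. W y / Z * q y x)" .
qed

lemma stationary_nonneg: "bo_stationary N1 N2 k1 k2 l1 l2 u1 u2 p \<Longrightarrow> 0 \<le> p x"
  unfolding bo_stationary_def by blast

lemma stationary_cut_balance:
  assumes st: "bo_stationary N1 N2 k1 k2 l1 l2 u1 u2 p" and A: "A \<subseteq> S"
  shows "(\<Sum>x\<in>A. \<Sum>y\<in>S-A. p x * q x y) = (\<Sum>x\<in>A. \<Sum>y\<in>S-A. p y * q y x)"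
proof -
  have finA: "finite A" using A finite_bo_states finite_subset by blast
  have row: "(\<Sum>y\<in>A. p x * q x y) + (\<Sum>y\<in>S-A. p x * q x y) = (\<Sum>y\<in>A. p y * q y x) + (\<Sum>y\<in>S-A. p y * q y x)"
    if x: "x \<in> A" for x
  proof -
    have split: "sum f (S-{x}) = sum f A - f x + sum f (S - A)" for f :: "nat \<times> nat \<Rightarrow> real"
    proof -
      have "S-{x} = (A-{x}) \<union> (S-A)" using x A by blast
      then have "sum f (S-{x}) = sum f (A-{x}) + sum f (S-A)"
        by (simp add: sum.union_disjoint finA finite_bo_states Diff_Int_distrib2)
      then show ?thesis using finA x by (simp add: sum_diff1)
    qed
    have "(\<Sum>y\<in>S-{x}. p x * q x y) = (\<Sum>y\<in>S-{x}. p y * q y x)"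
      using st x A unfolding bo_stationary_def by (auto simp: sum_distrib_left)
    then show ?thesis unfolding split by simp
  qed
  have "(\<Sum>x\<in>A. \<Sum>y\<in>A. p x * q x y) = (\<Sum>x\<in>A. \<Sum>y\<in>A. p y * q y x)"
    by (rule sum.swap)
  moreover have "(\<Sum>x\<in>A. (\<Sum>y\<in>A. p x * q x y) + (\<Sum>y\<in>S-A. p x * q x y))
      = (\<Sum>x\<in>A. (\<Sum>y\<in>A. p y * q y x) + (\<Sum>y\<in>S-A. p y * q y x))"
    by (rule sum.cong) (auto simp: row)
  ultimately show ?thesis by (simp add: sum.distrib)
qed

lemma stationary_no_outflow:
  assumes st: "bo_stationary N1 N2 k1 k2 l1 l2 u1 u2 p" and A: "A \<subseteq> S"
    and no_inflow: "\<And>x y. x \<in> A \<Longrightarrow> y \<in> S - A \<Longrightarrow> q y x = 0"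
    and x: "x \<in> A" and y: "y \<in> S - A"
  shows "p x * q x y = 0"
proof -
  have finA: "finite A" using A finite_bo_states finite_subset by blast
  have nn: "0 \<le> p x * q x y" for x y using stationary_nonneg[OF st] bo_rate_nonneg by simp
  have "(\<Sum>x\<in>A. \<Sum>y\<in>S-A. p x * q x y) = 0"
    using stationary_cut_balance[OF st A] no_inflow by simp
  then have "(\<Sum>y\<in>S-A. p x * q x y) = 0"
    using finA x nn sum_nonneg_eq_0_iff[of A "\<lambda>x. \<Sum>y\<in>S-A. p x * q x y"] by (simp add: sum_nonneg)
  moreover have "finite (S - A)" by (simp add: finite_bo_states)
  ultimately show ?thesis
    using y nn sum_nonneg_eq_0_iff[of "S-A" "\<lambda>y. p x * q x y"] by blast
qed

lemma stationary_zero_beyond_bound1: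
  assumes st: "bo_stationary N1 N2 k1 k2 l1 l2 u1 u2 p"
    and adm0: "adm_prob k2 N1 j = 0" and x: "(Suc j, b) \<in> S"
  shows "p (Suc j, b) = 0"
proof -
  define A where "A = {x\<in>S. j < fst x}"
  have "p (Suc j, b) * q (Suc j, b) (j, b) = 0"
  proof (rule stationary_no_outflow[OF st])
    fix x y assume "x \<in> A" "y \<in> S - A"
    moreover obtain a b c d where xy: "x = (a,b)" "y = (c,d)" by (cases x; cases y)
    ultimately have "j < a" "c \<le> j" by (auto simp: A_def)
    show "q y x = 0"
    proof (cases "a = Suc c \<and> b = d")
      case True
      with \<open>j < a\<close> \<open>c \<le> j\<close> have "c = j" by simp
      with True xy adm0 show ?thesis by (simp add: bo_rate_up1 bo_adm1_eq)
    next
      case False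
      with \<open>j < a\<close> \<open>c \<le> j\<close> xy show ?thesis by (intro bo_rate_eq_0_nonadjacent) auto
    qed
  qed (use x in \<open>auto simp: A_def bo_states_def\<close>)
  then show ?thesis using pos by (simp add: bo_rate_down1)
qed

lemma stationary_zero_beyond_bound2:
  assumes st: "bo_stationary N1 N2 k1 k2 l1 l2 u1 u2 p"
    and adm0: "adm_prob k1 N2 j = 0" and x: "(a, Suc j) \<in> S"
  shows "p (a, Suc j) = 0"
proof -
  define A where "A = {x\<in>S. j < snd x}"
  have "p (a, Suc j) * q (a, Suc j) (a, j) = 0"
  proof (rule stationary_no_outflow[OF st])
    fix x y assume "x \<in> A" "y \<in> S - A"
    moreover obtain a b c d where xy: "x = (a,b)" "y = (c,d)" by (cases x; cases y)
    ultimately have "j < b" "d \<le> j" by (auto simp: A_def)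
    show "q y x = 0"
    proof (cases "a = c \<and> b = Suc d")
      case True
      with \<open>j < b\<close> \<open>d \<le> j\<close> have "d = j" by simp
      with True xy adm0 show ?thesis by (simp add: bo_rate_up2 bo_adm2_eq)
    next
      case False
      with \<open>j < b\<close> \<open>d \<le> j\<close> xy show ?thesis by (intro bo_rate_eq_0_nonadjacent) auto
    qed
  qed (use x in \<open>auto simp: A_def bo_states_def\<close>)
  then show ?thesis using pos by (simp add: bo_rate_down2)
qed

lemma stationary_zero_off_support:
  assumes st: "bo_stationary N1 N2 k1 k2 l1 l2 u1 u2 p" and x: "x \<in> S" and W0: "\<not> 0 < W x"
  shows "p x = 0"
proof -
  obtain a b where ab: "x = (a,b)" by (cases x)
  then have "\<not> 0 < adm_weight k2 N1 a \<or> \<not> 0 < adm_weight k1 N2 b"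
    using x W0 bo_weight_pos_iff[of a b] by (auto simp: bo_states_def)
  then have "adm_weight k2 N1 a = 0 \<or> adm_weight k1 N2 b = 0"
    using adm_weight_nonneg by (metis order_less_le)
  then show ?thesis
    using adm_weight_eq_0_imp_adm_prob stationary_zero_beyond_bound1[OF st] stationary_zero_beyond_bound2[OF st] x ab
    by blast
qed

lemma bo_rate_zero_off_support:
  assumes x: "x \<in> S" "0 < W x" and y: "y \<in> S" "\<not> 0 < W y"
  shows "q x y = 0"
proof -
  obtain a b c d where xy: "x = (a,b)" "y = (c,d)" by (cases x; cases y)
  have wx: "0 < adm_weight k2 N1 a" "0 < adm_weight k1 N2 b"
    using x xy bo_weight_pos_iff by auto
  have wy: "\<not> 0 < adm_weight k2 N1 c \<or> \<not> 0 < adm_weight k1 N2 d"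
    using y xy bo_weight_pos_iff by (auto simp: bo_states_def)
  have not_below: "\<not> (c \<le> a \<and> d \<le> b)"
    using wx wy adm_weight_pos_mono by blast
  consider "c = Suc a" "d = b" | "c = a" "d = Suc b" | "y \<noteq> (Suc a, b)" "y \<noteq> (a, Suc b)"
    using xy by auto
  then show ?thesis
  proof cases
    case 1
    with wx wy have "\<not> 0 < adm_weight k2 N1 a * adm_prob k2 N1 a" by simp
    with wx(1) adm_prob_nonneg[of k2 N1 a] have "adm_prob k2 N1 a = 0"
      by (simp add: zero_less_mult_iff order_less_le)
    with 1 xy show ?thesis by (simp add: bo_rate_up1 bo_adm1_eq)
  next
    case 2
    with wx wy have "\<not> 0 < adm_weight k1 N2 b * adm_prob k1 N2 b" by simp
    with wx(2) adm_prob_nonneg[of k1 N2 b] have "adm_prob k1 N2 b = 0"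
      by (simp add: zero_less_mult_iff order_less_le)
    with 2 xy show ?thesis by (simp add: bo_rate_up2 bo_adm2_eq)
  next
    case 3
    with not_below xy show ?thesis by (intro bo_rate_eq_0_nonadjacent) auto
  qed
qed

lemma stationary_ratio_harmonic:
  assumes st: "bo_stationary N1 N2 k1 k2 l1 l2 u1 u2 p" and x: "x \<in> S" "0 < W x"
  shows "(\<Sum>y\<in>S-{x}. (p x / W x - p y / W y) * q x y) = 0"
proof -
  define h where "h y = p y / W y" for y
  have flow: "p y * q y x = h y * (W x * q x y)" if y: "y \<in> S" for y
  proof (cases "0 < W y")
    case True
    then have "p y = h y * W y" by (simp add: h_def)
    then show ?thesis using detailed_balance[OF x(1) y] by simp
  next
    case False
    then show ?thesis using stationary_zero_off_support[OF st y] by (simp add: h_def)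
  qed
  have "p x * (\<Sum>y\<in>S-{x}. q x y) = (\<Sum>y\<in>S-{x}. p y * q y x)"
    using st x unfolding bo_stationary_def by blast
  also have "\<dots> = W x * (\<Sum>y\<in>S-{x}. h y * q x y)"
    by (simp add: sum_distrib_left flow ac_simps)
  finally have "h x * (\<Sum>y\<in>S-{x}. q x y) = (\<Sum>y\<in>S-{x}. h y * q x y)"
    using x by (simp add: h_def)
  then show ?thesis
    by (simp add: h_def left_diff_distrib sum_subtractf sum_distrib_left)
qed

abbreviation "supp \<equiv> {x\<in>S. 0 < W x}"

lemma support_step_down:
  assumes x: "x \<in> supp" "x \<noteq> (0,0)"
  obtains y where "y \<in> supp" "y \<noteq> x" "Suc (fst y + snd y) = fst x + snd x" "0 < q x y"
proof -
  obtain a b where ab: "x = (a,b)" by (cases x)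
  have w: "a + b \<le> N1 + N2" "0 < adm_weight k2 N1 a" "0 < adm_weight k1 N2 b"
    using x ab bo_weight_pos_iff by auto
  show ?thesis
  proof (cases a)
    case (Suc a')
    have "0 < adm_weight k2 N1 a'" using adm_weight_pos_mono[OF w(2), of a'] Suc by simp
    then have "(a', b) \<in> supp" using w Suc by (simp add: bo_states_def bo_weight_pos_iff)
    moreover have "0 < q x (a', b)" using ab Suc pos by (simp add: bo_rate_down1)
    ultimately show ?thesis using that ab Suc by simp
  next
    case 0
    with x(2) ab obtain b' where b': "b = Suc b'" by (cases b) auto
    have "0 < adm_weight k1 N2 b'" using adm_weight_pos_mono[OF w(3), of b'] b' by simp
    then have "(a, b') \<in> supp" using w b' by (simp add: bo_states_def bo_weight_pos_iff)
    moreover have "0 < q x (a, b')" using ab b' pos by (simp add: bo_rate_down2)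
    ultimately show ?thesis using that ab b' by simp
  qed
qed

lemma harmonic_max_at_origin:
  fixes g :: "nat \<times> nat \<Rightarrow> real"
  assumes harm: "\<And>x. x \<in> supp \<Longrightarrow> (\<Sum>y\<in>S-{x}. (g x - g y) * q x y) = 0"
  shows "x \<in> supp \<Longrightarrow> \<forall>y\<in>supp. g y \<le> g x \<Longrightarrow> g (0,0) = g x"
proof (induction "fst x + snd x" arbitrary: x)
  case 0
  then show ?case by (cases x) auto
next
  case (Suc n)
  then have "x \<noteq> (0,0)" by auto
  then obtain y where y: "y \<in> supp" "y \<noteq> x" "Suc (fst y + snd y) = fst x + snd x" "0 < q x y"
    using support_step_down[OF Suc.prems(1)] by blast
  have nn: "0 \<le> (g x - g z) * q x z" if "z \<in> S - {x}" for z
  proof (cases "0 < W z")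
    case True
    with that have "z \<in> supp" by simp
    with Suc.prems(2) have "g z \<le> g x" by blast
    then show ?thesis using bo_rate_nonneg[of x z] by simp
  next
    case False
    then show ?thesis using that Suc.prems(1) bo_rate_zero_off_support by simp
  qed
  have fin: "finite (S - {x})" by (simp add: finite_bo_states)
  have "\<forall>z\<in>S-{x}. (g x - g z) * q x z = 0"
    using sum_nonneg_eq_0_iff[OF fin, of "\<lambda>z. (g x - g z) * q x z"] nn harm[OF Suc.prems(1)] by blast
  then have "(g x - g y) * q x y = 0" using y(1,2) by blast
  with y(4) have gy: "g y = g x" by simp
  have "g (0,0) = g y"
    using Suc.hyps(1)[of y] Suc.hyps(2) Suc.prems y gy by simp
  with gy show ?case by simp
qed

lemma harmonic_le_origin:
  fixes g :: "nat \<times> nat \<Rightarrow> real"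
  assumes harm: "\<And>x. x \<in> supp \<Longrightarrow> (\<Sum>y\<in>S-{x}. (g x - g y) * q x y) = 0" and x: "x \<in> supp"
  shows "g x \<le> g (0,0)"
proof -
  have fin: "finite supp" using finite_bo_states by simp
  have "(0,0) \<in> supp" using bo_weight_origin origin_in_bo_states by simp
  then have "Max (g ` supp) \<in> g ` supp" by (intro Max_in finite_imageI fin) blast
  then obtain xm where xm: "xm \<in> supp" "g xm = Max (g ` supp)" by auto
  then have "g (0,0) = g xm" using harmonic_max_at_origin[OF harm] fin by simp
  with xm x fin show ?thesis by simp
qed

text \<open>Uniqueness is a maximum principle: \<open>p / W\<close> is harmonic on the support of \<open>W\<close>, and every
  support state steps down inside the support to \<open>(0,0)\<close>, so both the maximum and the minimum of
  \<open>p / W\<close> are attained at the origin.\<close>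

lemma stationary_unique:
  assumes st: "bo_stationary N1 N2 k1 k2 l1 l2 u1 u2 p"
  shows "p = (\<lambda>x. W x / Z)"
proof -
  define h where "h y = p y / W y" for y
  have harm: "(\<Sum>y\<in>S-{x}. (h x - h y) * q x y) = 0" if "x \<in> supp" for x
    using stationary_ratio_harmonic[OF st] that by (simp add: h_def)
  have harm_neg: "(\<Sum>y\<in>S-{x}. ((-h) x - (-h) y) * q x y) = 0" if "x \<in> supp" for x
  proof -
    have "(\<Sum>y\<in>S-{x}. ((-h) x - (-h) y) * q x y) = - (\<Sum>y\<in>S-{x}. (h x - h y) * q x y)"
      by (simp add: sum_negf[symmetric] algebra_simps)
    with harm[OF that] show ?thesis by simp
  qed
  define c where "c = h (0,0)"
  have hc: "h x = c" if "x \<in> supp" for x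
    using harmonic_le_origin[of h, OF harm that] harmonic_le_origin[of "-h", OF harm_neg that] by (simp add: c_def)
  have pc: "p x = c * W x" for x
  proof (cases "x \<in> S \<and> 0 < W x")
    case True
    with hc[of x] show ?thesis by (simp add: h_def field_simps)
  next
    case False
    have "p x = 0 \<and> W x = 0"
    proof (cases "x \<in> S")
      case True
      with False have "\<not> 0 < W x" by blast
      then show ?thesis using stationary_zero_off_support[OF st True] bo_weight_nonneg[of x] by simp
    next
      case False
      then show ?thesis using st bo_weight_outside[of x] unfolding bo_stationary_def by blast
    qed
    then show ?thesis by simp
  qed
  have "1 = (\<Sum>x\<in>S. p x)" using st unfolding bo_stationary_def by simp
  also have "\<dots> = c * Z" unfolding bo_norm_def pc by (simp add: sum_distrib_left)
  finally show ?thesis using bo_norm_pos pc by (auto simp: fun_eq_iff field_simps)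
qed

lemma bo_pi_eq: "bo_pi N1 N2 k1 k2 l1 l2 u1 u2 = (\<lambda>x. W x / Z)"
  unfolding bo_pi_def using bo_stationary_bo_weight stationary_unique by (rule the_equality)

end

lemma bo_states_Sigma: "bo_states N1 N2 = Sigma {..N1+N2} (\<lambda>a. {..N1+N2-a})"
  by (auto simp: bo_states_def)

lemma sum_bo_states: "(\<Sum>x\<in>bo_states N1 N2. f x) = (\<Sum>a\<le>N1+N2. \<Sum>b\<le>N1+N2-a. f (a,b))"
  unfolding bo_states_Sigma by (subst sum.Sigma) auto

lemma bo_norm_eq:
  "bo_norm N1 N2 k1 k2 a1 a2 = (\<Sum>a\<le>N1+N2. class_weight a1 k2 N1 a * (\<Sum>b\<le>N1+N2-a. class_weight a2 k1 N2 b))"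
  unfolding bo_norm_def sum_bo_states sum_distrib_left
  by (intro sum.cong refl) (auto simp: bo_weight_def)

text \<open>A class-1 call is blocked either because the system is full (\<open>b = N1 + N2 - a\<close>) or,
  with probability \<open>1 - adm_prob\<close>, because class 1 is at its overflow bound.\<close>

lemma B1_bo_numerator_eq:
  "(\<Sum>x\<in>bo_states N1 N2. bo_weight N1 N2 k1 k2 a1 a2 x * (1 - bo_adm1 N1 N2 k1 k2 x))
   = (\<Sum>a\<le>N1+N2. class_weight a1 k2 N1 a * (class_weight a2 k1 N2 (N1+N2-a)
        + (1 - adm_prob k2 N1 a) * (\<Sum>b<N1+N2-a. class_weight a2 k1 N2 b)))"
  unfolding sum_bo_states
proof (rule sum.cong[OF refl])
  fix a assume a: "a \<in> {..N1+N2}"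
  define c where "c = N1 + N2 - a"
  define w where "w b = bo_weight N1 N2 k1 k2 a1 a2 (a,b) * (1 - bo_adm1 N1 N2 k1 k2 (a,b))" for b
  have "(\<Sum>b\<le>c. w b) = (\<Sum>b<c. w b) + w c"
    by (simp add: lessThan_Suc_atMost[symmetric])
  also have "(\<Sum>b<c. w b) = (\<Sum>b<c. class_weight a1 k2 N1 a * (1 - adm_prob k2 N1 a) * class_weight a2 k1 N2 b)"
    by (rule sum.cong[OF refl]) (use a in \<open>auto simp: c_def w_def bo_weight_def bo_adm1_eq\<close>)
  also have "w c = class_weight a1 k2 N1 a * class_weight a2 k1 N2 c"
    using a by (simp add: c_def w_def bo_weight_def bo_adm1_eq)
  finally show "(\<Sum>b\<le>N1+N2-a. w b) = class_weight a1 k2 N1 a * (class_weight a2 k1 N2 (N1+N2-a)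
        + (1 - adm_prob k2 N1 a) * (\<Sum>b<N1+N2-a. class_weight a2 k1 N2 b))"
    by (simp add: c_def sum_distrib_left algebra_simps)
qed

lemma B1_bo_eq:
  assumes "0 < l1" "0 < l2" "0 < u1" "0 < u2"
  shows "B1_bo N1 N2 k1 k2 l1 l2 u1 u2 =
   (\<Sum>a\<le>N1+N2. class_weight (l1/u1) k2 N1 a * (class_weight (l2/u2) k1 N2 (N1+N2-a)
        + (1 - adm_prob k2 N1 a) * (\<Sum>b<N1+N2-a. class_weight (l2/u2) k1 N2 b)))
   / (\<Sum>a\<le>N1+N2. class_weight (l1/u1) k2 N1 a * (\<Sum>b\<le>N1+N2-a. class_weight (l2/u2) k1 N2 b))"
  unfolding B1_bo_def bo_chain.bo_pi_eq[OF bo_chain.intro[OF assms]] B1_bo_numerator_eq[symmetric]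
    bo_norm_eq[symmetric]
  by (simp add: sum_divide_distrib)

lemma bo_states_swap: "bo_states N2 N1 = prod.swap ` bo_states N1 N2"
proof (rule set_eqI)
  fix x :: "nat \<times> nat"
  show "x \<in> bo_states N2 N1 \<longleftrightarrow> x \<in> prod.swap ` bo_states N1 N2"
    using image_iff[of x prod.swap] by (cases x) (force simp: bo_states_def)
qed

lemma bo_weight_swap: "bo_weight N2 N1 k2 k1 a2 a1 (prod.swap x) = bo_weight N1 N2 k1 k2 a1 a2 x"
  by (cases x) (simp add: bo_weight_def add.commute)

lemma bo_norm_swap: "bo_norm N2 N1 k2 k1 a2 a1 = bo_norm N1 N2 k1 k2 a1 a2"
  unfolding bo_norm_def bo_states_swap[of N2 N1] by (simp only: sum.reindex[OF inj_swap] comp_def bo_weight_swap)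

lemma bo_adm1_swap: "bo_adm1 N2 N1 k2 k1 (prod.swap x) = bo_adm2 N1 N2 k1 k2 x"
  by (cases x) (simp add: bo_adm1_def bo_adm2_def add.commute)

lemma B2_bo_swap:
  assumes "0 < l1" "0 < l2" "0 < u1" "0 < u2"
  shows "B2_bo N1 N2 k1 k2 l1 l2 u1 u2 = B1_bo N2 N1 k2 k1 l2 l1 u2 u1"
proof -
  have "B1_bo N2 N1 k2 k1 l2 l1 u2 u1 = (\<Sum>x\<in>bo_states N1 N2.
      bo_weight N2 N1 k2 k1 (l2/u2) (l1/u1) (prod.swap x) / bo_norm N2 N1 k2 k1 (l2/u2) (l1/u1)
        * (1 - bo_adm1 N2 N1 k2 k1 (prod.swap x)))"
    unfolding B1_bo_def bo_chain.bo_pi_eq[OF bo_chain.intro[OF assms(2,1,4,3)]] bo_states_swap[of N2 N1]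
    by (simp only: sum.reindex[OF inj_swap] comp_def)
  also have "\<dots> = B2_bo N1 N2 k1 k2 l1 l2 u1 u2"
    unfolding B2_bo_def bo_chain.bo_pi_eq[OF bo_chain.intro[OF assms]] bo_weight_swap bo_adm1_swap
      bo_norm_swap[of N2 N1 k2 k1 "l2/u2" "l1/u1"] ..
  finally show ?thesis ..
qed

section \<open>Gaussian limits of scaled Riemann sums\<close>

lemma integrable_std_normal_density_shift: "integrable lborel (\<lambda>y. std_normal_density (y - \<beta>))"
proof -
  have "integrable lborel (\<lambda>x. std_normal_density x)"
    using integrable_std_normal_moment[of 0] by simp
  then show ?thesis
    using lborel_integrable_real_affine_iff[of 1 "\<lambda>x. std_normal_density x" "- \<beta>"] by simp
qed

lemma exp_quadratic_eq_std_normal_density: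
  "exp (\<beta> * t - t\<^sup>2 / 2) / (sqrt (2 * pi) * exp (\<beta>\<^sup>2 / 2)) = std_normal_density (t - \<beta>)"
proof -
  have "exp (\<beta> * t - t\<^sup>2 / 2) = exp (- (t - \<beta>)\<^sup>2 / 2) * exp (\<beta>\<^sup>2 / 2)"
    by (simp add: exp_add[symmetric] power2_eq_square field_simps)
  then show ?thesis by (simp add: std_normal_density_def)
qed

lemma Phi_eq_integral: "(LINT y|lborel. std_normal_density (y - \<beta>) * indicator {..b} y) = Phi (b - \<beta>)"
proof -
  have "(LINT x|lborel. indicator {..b - \<beta>} x * std_normal_density x)
      = (LINT y|lborel. indicator {..b - \<beta>} (y - \<beta>) * std_normal_density (y - \<beta>))"
    using lborel_integral_real_affine[of 1 "\<lambda>x. indicator {..b - \<beta>} x * std_normal_density x" "- \<beta>"] by simp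
  moreover have "indicator {..b - \<beta>} (y - \<beta>) = (indicator {..b} y :: real)" for y
    by (simp add: indicator_def)
  ultimately show ?thesis unfolding Phi_def set_lebesgue_integral_def by (simp add: ac_simps)
qed

lemma Phi_mono: "mono Phi"
proof
  fix x y :: real assume xy: "x \<le> y"
  have "(LINT t|lborel. std_normal_density (t - 0) * indicator {..x} t) \<le> (LINT t|lborel. std_normal_density (t - 0) * indicator {..y} t)"
  proof (rule integral_mono)
    show "integrable lborel (\<lambda>t. std_normal_density (t - 0) * indicator {..x} t)"
      using integrable_std_normal_density_shift[of 0] by (intro integrable_real_mult_indicator) auto
    show "integrable lborel (\<lambda>t. std_normal_density (t - 0) * indicator {..y} t)"
      using integrable_std_normal_density_shift[of 0] by (intro integrable_real_mult_indicator) auto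
    show "std_normal_density (t - 0) * indicator {..x} t \<le> std_normal_density (t - 0) * indicator {..y} t" for t
      using xy by (auto simp: indicator_def normal_density_nonneg)
  qed
  then show "Phi x \<le> Phi y" using Phi_eq_integral[of 0 x] Phi_eq_integral[of 0 y] by simp
qed

lemma Phi_measurable[measurable]: "Phi \<in> borel_measurable borel"
  by (rule borel_measurable_mono[OF Phi_mono])

lemma Phi_pos: "0 < Phi x"
proof -
  define c where "c = std_normal_density (\<bar>x\<bar> + 1)"
  have c: "0 < c" by (simp add: c_def std_normal_density_def)
  have "c = (LINT t|lborel. c * indicator {x-1..x} t)" by simp
  also have "\<dots> \<le> (LINT t|lborel. std_normal_density (t - 0) * indicator {..x} t)"
  proof (rule integral_mono)
    show "integrable lborel (\<lambda>t. c * indicator {x - 1..x} t)"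
      by (intro integrable_mult_right integrable_real_indicator) auto
    show "integrable lborel (\<lambda>t. std_normal_density (t - 0) * indicator {..x} t)"
      using integrable_std_normal_density_shift[of 0] by (intro integrable_real_mult_indicator) auto
    show "c * indicator {x - 1..x} t \<le> std_normal_density (t - 0) * indicator {..x} t" for t
    proof (cases "t \<in> {x-1..x}")
      case True
      then have "\<bar>t\<bar> \<le> \<bar>\<bar>x\<bar> + 1\<bar>" by auto
      then have "t\<^sup>2 \<le> (\<bar>x\<bar> + 1)\<^sup>2" by (simp only: abs_le_square_iff)
      then have "exp (- (\<bar>x\<bar> + 1)\<^sup>2 / 2) \<le> exp (- t\<^sup>2 / 2)" by simp
      then show ?thesis using True by (simp add: c_def std_normal_density_def divide_right_mono)
    qed (simp add: indicator_def)
  qed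
  finally show ?thesis using c Phi_eq_integral[of 0 x] by simp
qed

lemma Phi_le_1: "Phi x \<le> 1"
proof -
  have "Phi x = (LINT t|lborel. std_normal_density (t - 0) * indicator {..x} t)"
    using Phi_eq_integral[of 0 x] by simp
  also have "\<dots> \<le> (LINT t|lborel. std_normal_density t * t ^ (2 * 0))"
    using integrable_std_normal_density_shift[of 0]
    by (intro integral_mono integrable_real_mult_indicator) (auto simp: indicator_def)
  also have "\<dots> = 1" by (subst integral_std_normal_moment_even) simp
  finally show ?thesis .
qed

lemma Phi_eq_integral_less:
  "(LINT y|lborel. std_normal_density (y - \<beta>) * indicator {..<b} y) = Phi (b - \<beta>)"
proof -
  have "AE y in lborel. y \<noteq> b" by (rule AE_lborel_singleton)
  then have "(LINT y|lborel. std_normal_density (y - \<beta>) * indicator {..<b} y)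
      = (LINT y|lborel. std_normal_density (y - \<beta>) * indicator {..b} y)"
    by (intro integral_cong_AE) (auto elim!: eventually_mono simp: indicator_def)
  then show ?thesis using Phi_eq_integral by simp
qed

lemma integrable_std_normal_density_mult_bounded:
  assumes "f \<in> borel_measurable lborel" "\<And>t. \<bar>f t\<bar> \<le> C"
  shows "integrable lborel (\<lambda>t. std_normal_density (t - \<beta>) * f t)"
proof (rule Bochner_Integration.integrable_bound)
  show "integrable lborel (\<lambda>t. C * std_normal_density (t - \<beta>))"
    using integrable_std_normal_density_shift by simp
  show "AE t in lborel. norm (std_normal_density (t - \<beta>) * f t) \<le> norm (C * std_normal_density (t - \<beta>))"
  proof (rule AE_I2)
    fix t
    have "\<bar>f t\<bar> * std_normal_density (t - \<beta>) \<le> C * std_normal_density (t - \<beta>)"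
      by (rule mult_right_mono) (use assms(2) in auto)
    moreover have "0 \<le> C" using order_trans[OF abs_ge_zero assms(2)] .
    ultimately show "norm (std_normal_density (t - \<beta>) * f t) \<le> norm (C * std_normal_density (t - \<beta>))"
      by (simp add: abs_mult mult.commute)
  qed
qed (use assms(1) in measurable)

lemma integrable_exp_nonneg_half: "integrable lborel (\<lambda>x::real. indicator {0..} x * exp (- (1/2) * x))"
proof -
  have "integrable lebesgue (\<lambda>x::real. indicator {0..} x *\<^sub>R exp (- (1/2) * x))"
    by (intro nonnegative_absolutely_integrable_1 [unfolded set_integrable_def] integrable_on_exp_minus_to_infinity) auto
  then have "integrable (completion lborel) (\<lambda>x::real. indicator {0..} x * exp (- (1/2) * x))" by simp
  then show ?thesis by (subst (asm) integrable_completion) auto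
qed

lemma integrable_exp_abs: "integrable lborel (\<lambda>x::real. exp (- \<bar>x\<bar> / 2))"
proof -
  have i1: "integrable lborel (\<lambda>x::real. indicator {0..} x * exp (- (1/2) * x))" by (rule integrable_exp_nonneg_half)
  have i2: "integrable lborel (\<lambda>x::real. indicator {0..} (-x) * exp (- (1/2) * (-x)))"
    using i1 lborel_integrable_real_affine_iff[of "-1" "\<lambda>x. indicator {0..} x * exp (- (1/2) * x)" 0] by simp
  show ?thesis
  proof (rule Bochner_Integration.integrable_bound[OF Bochner_Integration.integrable_add[OF i1 i2]])
    show "(\<lambda>x::real. exp (- \<bar>x\<bar> / 2)) \<in> borel_measurable lborel" by measurable
    show "AE x in lborel. norm (exp (- \<bar>x::real\<bar> / 2)) \<le> norm (indicator {0..} x * exp (- (1/2) * x) + indicator {0..} (-x) * exp (- (1/2) * (-x)))"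
      by (rule AE_I2) (auto simp: indicator_def abs_if add_nonneg_pos add_pos_nonneg)
  qed
qed

lemma indicator_unit_interval: "indicator {real n..<real n + 1} y = (if 0 \<le> y \<and> nat \<lfloor>y\<rfloor> = n then 1 else (0::real))"
proof -
  have "(real n \<le> y \<and> y < real n + 1) \<longleftrightarrow> (0 \<le> y \<and> nat \<lfloor>y\<rfloor> = n)"
  proof
    assume h: "real n \<le> y \<and> y < real n + 1"
    then have "\<lfloor>y\<rfloor> = int n" by (intro floor_unique) auto
    then show "0 \<le> y \<and> nat \<lfloor>y\<rfloor> = n" using h by auto
  next
    assume h: "0 \<le> y \<and> nat \<lfloor>y\<rfloor> = n"
    then have "\<lfloor>y\<rfloor> = int n" by auto
    then show "real n \<le> y \<and> y < real n + 1" by linarith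
  qed
  then show ?thesis by (auto simp: indicator_def)
qed

lemma sum_step_function_eq:
  fixes h :: "nat \<Rightarrow> real"
  assumes "\<And>n. L < n \<Longrightarrow> h n = 0"
  shows "(\<Sum>n\<le>L. h n * indicator {real n..<real n + 1} y) = (if 0 \<le> y then h (nat \<lfloor>y\<rfloor>) else 0)"
proof -
  have "(\<Sum>n\<le>L. h n * indicator {real n..<real n + 1} y)
      = (\<Sum>n\<le>L. if n = nat \<lfloor>y\<rfloor> then (if 0 \<le> y then h n else 0) else 0)"
    by (rule sum.cong) (auto simp: indicator_unit_interval)
  also have "\<dots> = (if 0 \<le> y then h (nat \<lfloor>y\<rfloor>) else 0)"
    using sum.delta[of "{..L}" "nat \<lfloor>y\<rfloor>" "\<lambda>n. if 0 \<le> y then h n else 0"] assms[of "nat \<lfloor>y\<rfloor>"] by auto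
  finally show ?thesis .
qed

lemma sum_eq_integral_step_function:
  fixes c :: "nat \<Rightarrow> real" and s C :: real
  assumes s: "0 < s"
  shows "(\<Sum>n\<le>L. c n) / s = (LINT t|lborel. (\<Sum>n\<le>L. c n * indicator {real n..<real n + 1} (C + s * t)))"
proof -
  have int: "integrable lborel (\<lambda>y. c n * indicator {real n..<real n + 1} y)" for n
    by (intro integrable_mult_right integrable_real_indicator) auto
  have "(LINT y|lborel. (\<Sum>n\<le>L. c n * indicator {real n..<real n + 1} y)) = (\<Sum>n\<le>L. c n)"
  proof -
    have "(LINT y|lborel. (\<Sum>n\<le>L. c n * indicator {real n..<real n + 1} y)) = (\<Sum>n\<le>L. LINT y|lborel. c n * indicator {real n..<real n + 1} y)"
      by (rule Bochner_Integration.integral_sum) (use int in auto)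
    also have "\<dots> = (\<Sum>n\<le>L. c n)"
    proof (rule sum.cong[OF refl])
      fix n
      have "(LINT y|lborel. c n * indicator {real n..<real n + 1} y) = c n * (LINT y|lborel. indicator {real n..<real n + 1} y)"
        by (rule integral_mult_right_zero)
      also have "(LINT y|lborel. indicator {real n..<real n + 1} y) = (1::real)"
        by simp
      finally show "(LINT y|lborel. c n * indicator {real n..<real n + 1} y) = c n" by simp
    qed
    finally show ?thesis .
  qed
  moreover have "(LINT y|lborel. (\<Sum>n\<le>L. c n * indicator {real n..<real n + 1} y))
      = s * (LINT t|lborel. (\<Sum>n\<le>L. c n * indicator {real n..<real n + 1} (C + s * t)))"
    using lborel_integral_real_affine[of s "\<lambda>y. (\<Sum>n\<le>L. c n * indicator {real n..<real n + 1} y)" C] s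
    by simp
  ultimately show ?thesis using s by (simp add: field_simps)
qed

lemma exp_floor_deviation_le:
  fixes C s t :: real
  assumes s: "1 \<le> s" and nonneg: "0 \<le> C + s * t"
  shows "exp (- \<bar>real (nat \<lfloor>C + s * t\<rfloor>) - C\<bar> / (2 * s)) \<le> exp (1/2) * exp (- \<bar>t\<bar> / 2)"
proof -
  define n where "n = nat \<lfloor>C + s * t\<rfloor>"
  have "real n \<le> C + s * t" "C + s * t < real n + 1" using nonneg unfolding n_def by linarith+
  then have "s * \<bar>t\<bar> - 1 \<le> \<bar>real n - C\<bar>" using s by (auto simp: abs_if split: if_splits)
  then have "- \<bar>real n - C\<bar> / (2 * s) \<le> - (s * \<bar>t\<bar> - 1) / (2 * s)"
    using s by (intro divide_right_mono) auto
  also have "\<dots> = - \<bar>t\<bar> / 2 + 1 / (2 * s)" using s by (simp add: field_simps)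
  also have "\<dots> \<le> 1/2 + - \<bar>t\<bar> / 2" using s by (simp add: field_simps)
  finally show ?thesis unfolding n_def[symmetric] exp_add[symmetric] by simp
qed

lemma step_function_dominated:
  fixes h :: "nat \<Rightarrow> real" and C s t :: real
  assumes zero: "\<And>n. L < n \<Longrightarrow> h n = 0"
    and bound: "\<And>n. \<bar>h n\<bar> \<le> D * exp (- \<bar>real n - C\<bar> / (2 * s))" and s: "1 \<le> s"
  shows "\<bar>\<Sum>n\<le>L. h n * indicator {real n..<real n + 1} (C + s * t)\<bar> \<le> \<bar>D\<bar> * exp (1/2) * exp (- \<bar>t\<bar> / 2)"
proof (cases "0 \<le> C + s * t")
  case True
  then have "\<bar>\<Sum>n\<le>L. h n * indicator {real n..<real n + 1} (C + s * t)\<bar> = \<bar>h (nat \<lfloor>C + s * t\<rfloor>)\<bar>"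
    using sum_step_function_eq[OF zero, where y = "C + s * t"] by simp
  also have "\<dots> \<le> D * exp (- \<bar>real (nat \<lfloor>C + s * t\<rfloor>) - C\<bar> / (2 * s))" by (rule bound)
  also have "\<dots> \<le> \<bar>D\<bar> * exp (- \<bar>real (nat \<lfloor>C + s * t\<rfloor>) - C\<bar> / (2 * s))"
    by (intro mult_right_mono) auto
  also have "\<dots> \<le> \<bar>D\<bar> * exp (1/2) * exp (- \<bar>t\<bar> / 2)"
    unfolding mult.assoc using exp_floor_deviation_le[OF s True] by (intro mult_left_mono) auto
  finally show ?thesis .
next
  case False
  then show ?thesis using sum_step_function_eq[OF zero, where y = "C + s * t"] by simp
qed

lemma scaled_sum_tendsto_integral:
  fixes h :: "nat \<Rightarrow> nat \<Rightarrow> real" and s C :: "nat \<Rightarrow> real" and L :: "nat \<Rightarrow> nat"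
    and H :: "real \<Rightarrow> real" and D :: real and E :: "real set"
  assumes s: "filterlim s at_top sequentially" "\<And>m. 0 < s m"
    and C: "filterlim (\<lambda>m. C m / s m) at_top sequentially"
    and supp: "\<And>m n. L m < n \<Longrightarrow> h m n = 0"
    and bound: "eventually (\<lambda>m. \<forall>n. \<bar>h m n\<bar> \<le> D * exp (- \<bar>real n - C m\<bar> / (2 * s m))) sequentially"
    and lim: "\<And>t. t \<notin> E \<Longrightarrow> (\<lambda>m. h m (nat \<lfloor>C m + s m * t\<rfloor>)) \<longlonglongrightarrow> H t"
    and E: "finite E"
    and H: "H \<in> borel_measurable lborel"
  shows "(\<lambda>m. (\<Sum>n\<le>L m. h m n) / s m) \<longlonglongrightarrow> (LINT t|lborel. H t)"
proof -
  define f where "f m t = (\<Sum>n\<le>L m. h m n * indicator {real n..<real n + 1} (C m + s m * t))" for m t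
  have eq: "(\<Sum>n\<le>L m. h m n) / s m = (LINT t|lborel. f m t)" for m
    unfolding f_def by (rule sum_eq_integral_step_function[OF s(2)])
  have fstep: "f m t = (if 0 \<le> C m + s m * t then h m (nat \<lfloor>C m + s m * t\<rfloor>) else 0)" for m t
    unfolding f_def using supp by (rule sum_step_function_eq)
  have fmeas: "f m \<in> borel_measurable lborel" for m
    unfolding f_def by measurable
  obtain m0 where m0: "\<And>m. m \<ge> m0 \<Longrightarrow> (\<forall>n. \<bar>h m n\<bar> \<le> D * exp (- \<bar>real n - C m\<bar> / (2 * s m))) \<and> 1 \<le> s m"
    using eventually_conj[OF bound filterlim_at_top_dense[THEN iffD1, OF s(1), rule_format, of 1]]
    unfolding eventually_sequentially by (auto intro: less_imp_le)
  define w where "w t = \<bar>D\<bar> * exp (1/2) * exp (- \<bar>t\<bar> / 2)" for t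
  have wint: "integrable lborel w" unfolding w_def
    by (intro integrable_mult_right integrable_exp_abs)
  have fbound: "\<bar>f m t\<bar> \<le> w t" if "m \<ge> m0" for m t
    unfolding f_def w_def using supp m0[OF that] by (intro step_function_dominated) auto
  have flim: "(\<lambda>m. f m t) \<longlonglongrightarrow> H t" if t: "t \<notin> E" for t
  proof -
    have ev: "eventually (\<lambda>m. - t \<le> C m / s m) sequentially"
      using C by (simp add: filterlim_at_top)
    have "eventually (\<lambda>m. h m (nat \<lfloor>C m + s m * t\<rfloor>) = f m t) sequentially"
      using ev
    proof eventually_elim
      case (elim m)
      then have "0 \<le> C m + s m * t" using s(2)[of m] by (simp add: field_simps)
      then show ?case by (simp add: fstep)
    qed
    then show ?thesis by (rule Lim_transform_eventually[OF lim[OF t]])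
  qed
  have AE: "AE t in lborel. t \<notin> E"
    using finite_imp_null_set_lborel[OF E] by (rule AE_not_in)
  have "(\<lambda>m. LINT t|lborel. f (m + m0) t) \<longlonglongrightarrow> (LINT t|lborel. H t)"
  proof (rule integral_dominated_convergence[OF H _ wint])
    show "\<And>i. f (i + m0) \<in> borel_measurable lborel" by (rule fmeas)
    show "AE x in lborel. (\<lambda>i. f (i + m0) x) \<longlonglongrightarrow> H x"
      using AE by eventually_elim (rule LIMSEQ_ignore_initial_segment[OF flim])
    show "\<And>i. AE x in lborel. norm (f (i + m0) x) \<le> w x"
      using fbound by auto
  qed
  then have "(\<lambda>m. LINT t|lborel. f m t) \<longlonglongrightarrow> (LINT t|lborel. H t)"
    by (rule LIMSEQ_offset)
  then show ?thesis unfolding eq .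
qed

lemma floor_scaled_tendsto:
  fixes s C :: "nat \<Rightarrow> real"
  assumes s: "filterlim s at_top sequentially" "\<And>m. 0 < s m"
    and C: "filterlim (\<lambda>m. C m / s m) at_top sequentially"
  shows "(\<lambda>m. (real (nat \<lfloor>C m + s m * t\<rfloor>) - C m) / s m) \<longlonglongrightarrow> t"
proof -
  have is0: "(\<lambda>m. 1 / s m) \<longlonglongrightarrow> 0"
    using tendsto_inverse_0_at_top[OF s(1)] by (simp add: divide_inverse)
  have ev: "eventually (\<lambda>m. - t \<le> C m / s m) sequentially"
    using C by (simp add: filterlim_at_top)
  have "eventually (\<lambda>m. \<bar>(real (nat \<lfloor>C m + s m * t\<rfloor>) - C m) / s m - t\<bar> \<le> 1 / s m) sequentially"
    using ev
  proof eventually_elim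
    case (elim m)
    have sp: "0 < s m" by (rule s(2))
    have nn: "0 \<le> C m + s m * t" using elim sp by (simp add: field_simps)
    have f1: "real (nat \<lfloor>C m + s m * t\<rfloor>) \<le> C m + s m * t" "C m + s m * t < real (nat \<lfloor>C m + s m * t\<rfloor>) + 1"
      using nn by linarith+
    have "(real (nat \<lfloor>C m + s m * t\<rfloor>) - C m) / s m - t = (real (nat \<lfloor>C m + s m * t\<rfloor>) - (C m + s m * t)) / s m"
      using sp by (simp add: field_simps)
    moreover have "\<bar>real (nat \<lfloor>C m + s m * t\<rfloor>) - (C m + s m * t)\<bar> \<le> 1" using f1 by linarith
    ultimately show ?case using sp by (simp add: abs_divide divide_right_mono)
  qed
  then have "(\<lambda>m. (real (nat \<lfloor>C m + s m * t\<rfloor>) - C m) / s m - t) \<longlonglongrightarrow> 0"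
    by (intro Lim_null_comparison[OF _ is0]) simp
  then show ?thesis by (simp add: LIM_zero_iff)
qed

lemma eventually_below_cutoff:
  fixes s b :: "nat \<Rightarrow> real" and n :: "nat \<Rightarrow> nat"
  assumes s: "\<And>m. 0 < s m" and d: "(\<lambda>m. (real (n m) - b m) / s m) \<longlonglongrightarrow> d" and "d < 0"
  shows "eventually (\<lambda>m. real (n m) \<le> b m) sequentially"
proof -
  have "eventually (\<lambda>m. (real (n m) - b m) / s m < 0) sequentially"
    using d \<open>d < 0\<close> by (intro order_tendstoD) auto
  then show ?thesis
  proof (rule eventually_mono)
    fix m assume "(real (n m) - b m) / s m < 0"
    then show "real (n m) \<le> b m" using s[of m] by (simp add: divide_less_0_iff)
  qed
qed

lemma eventually_beyond_cutoff:
  fixes s b :: "nat \<Rightarrow> real" and n :: "nat \<Rightarrow> nat"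
  assumes s: "filterlim s at_top sequentially" "\<And>m. 0 < s m"
    and d: "(\<lambda>m. (real (n m) - b m) / s m) \<longlonglongrightarrow> d" and "0 < d"
  shows "eventually (\<lambda>m. b m + 2 \<le> real (n m)) sequentially"
proof -
  have "eventually (\<lambda>m. d / 2 < (real (n m) - b m) / s m) sequentially"
    using d \<open>0 < d\<close> by (intro order_tendstoD) auto
  moreover have "eventually (\<lambda>m. 4 / d \<le> s m) sequentially"
    using s(1) by (simp add: filterlim_at_top)
  ultimately show ?thesis
  proof eventually_elim
    case (elim m)
    have "d / 2 * s m < real (n m) - b m" using elim(1) s(2)[of m] by (simp add: pos_less_divide_eq)
    moreover have "2 \<le> d / 2 * s m" using elim(2) \<open>0 < d\<close> by (simp add: pos_divide_le_eq field_simps)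
    ultimately show ?case by simp
  qed
qed

lemma cutoff_tendsto_indicator:
  fixes s C b :: "nat \<Rightarrow> real" and n :: "nat \<Rightarrow> nat" and ch :: "nat \<Rightarrow> nat \<Rightarrow> real"
  assumes s: "filterlim s at_top sequentially" "\<And>m. 0 < s m"
    and nl: "(\<lambda>m. (real (n m) - C m) / s m) \<longlonglongrightarrow> t"
    and bl: "(\<lambda>m. (b m - C m) / s m) \<longlonglongrightarrow> c"
    and tc: "t \<noteq> c"
    and ch1: "\<And>m x. real x \<le> b m \<Longrightarrow> ch m x = 1"
    and ch0: "\<And>m x. b m + 2 \<le> real x \<Longrightarrow> ch m x = 0"
  shows "(\<lambda>m. ch m (n m)) \<longlonglongrightarrow> indicator {..c} t"
proof -
  have "(\<lambda>m. (real (n m) - C m) / s m - (b m - C m) / s m) \<longlonglongrightarrow> t - c" by (intro tendsto_diff nl bl)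
  then have d: "(\<lambda>m. (real (n m) - b m) / s m) \<longlonglongrightarrow> t - c" by (simp add: diff_divide_distrib)
  show ?thesis
  proof (cases "t < c")
    case True
    then have "t - c < 0" by simp
    from eventually_below_cutoff[OF s(2) d this]
    have "eventually (\<lambda>m. ch m (n m) = 1) sequentially" by (rule eventually_mono) (erule ch1)
    then have "(\<lambda>m. ch m (n m)) \<longlonglongrightarrow> 1" by (rule tendsto_eventually)
    then show ?thesis using True by simp
  next
    case False
    with tc have "0 < t - c" by simp
    from eventually_beyond_cutoff[OF s d this]
    have "eventually (\<lambda>m. ch m (n m) = 0) sequentially" by (rule eventually_mono) (erule ch0)
    then have "(\<lambda>m. ch m (n m)) \<longlonglongrightarrow> 0" by (rule tendsto_eventually)
    then show ?thesis using \<open>0 < t - c\<close> by simp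
  qed
qed

lemma floor_div_tendsto:
  fixes x s :: "nat \<Rightarrow> real"
  assumes s: "filterlim s at_top sequentially" "\<And>m. 0 < s m" and xl: "(\<lambda>m. x m / s m) \<longlonglongrightarrow> c"
  shows "(\<lambda>m. real_of_int \<lfloor>x m\<rfloor> / s m) \<longlonglongrightarrow> c"
proof -
  have is0: "(\<lambda>m. 1 / s m) \<longlonglongrightarrow> 0"
    using tendsto_inverse_0_at_top[OF s(1)] by (simp add: divide_inverse)
  have "(\<lambda>m. real_of_int \<lfloor>x m\<rfloor> / s m - x m / s m) \<longlonglongrightarrow> 0"
  proof (rule Lim_null_comparison[OF _ is0])
    show "eventually (\<lambda>m. norm (real_of_int \<lfloor>x m\<rfloor> / s m - x m / s m) \<le> 1 / s m) sequentially"
    proof (rule always_eventually, rule allI)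
      fix m
      have "\<bar>real_of_int \<lfloor>x m\<rfloor> - x m\<bar> \<le> 1" by linarith
      then have "\<bar>real_of_int \<lfloor>x m\<rfloor> - x m\<bar> / s m \<le> 1 / s m" using s(2)[of m] by (intro divide_right_mono) auto
      then show "norm (real_of_int \<lfloor>x m\<rfloor> / s m - x m / s m) \<le> 1 / s m"
        using s(2)[of m] by (simp add: diff_divide_distrib[symmetric] abs_divide)
    qed
  qed
  from tendsto_add[OF this xl] show ?thesis by simp
qed

section \<open>Local limit theorem for Poisson weights\<close>

definition ln_poisson :: "real \<Rightarrow> nat \<Rightarrow> real" where
  "ln_poisson a n = real n * ln a - ln (fact n)"

lemma ln_poisson_Suc: "ln_poisson a (Suc n) = ln_poisson a n + ln a - ln (real (Suc n))"
proof -
  have "ln (fact (Suc n) :: real) = ln (real (Suc n)) + ln (fact n)"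
    by (simp add: ln_mult del: of_nat_Suc)
  then show ?thesis unfolding ln_poisson_def by (simp add: algebra_simps)
qed

lemma exp_ln_poisson: "0 < a \<Longrightarrow> exp (ln_poisson a n) = a ^ n / fact n"
  unfolding ln_poisson_def by (simp add: exp_diff exp_of_nat_mult)

text \<open>Expansion of \<open>ln_poisson a (M + j) - ln_poisson a M = j ln a - \<Sum>i=1..j. ln (M + i)\<close>,
  using \<open>\<Sum>i=1..j. ln (1 + i / M) \<approx> (j\<^sup>2 + j) / (2 M)\<close>.\<close>

definition ln_poisson_taylor :: "real \<Rightarrow> real \<Rightarrow> real \<Rightarrow> real" where
  "ln_poisson_taylor a M j = j * ln (a / M) - (j\<^sup>2 + j) / (2 * M)"

definition ln_poisson_remainder :: "real \<Rightarrow> nat \<Rightarrow> nat \<Rightarrow> real" where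
  "ln_poisson_remainder a M n = ln_poisson a n - ln_poisson a M - ln_poisson_taylor a M (real n - real M)"

lemma ln_poisson_remainder_Suc_diff:
  assumes "0 < a" "0 < M"
  shows "ln_poisson_remainder a M (Suc n) - ln_poisson_remainder a M n = - (ln (1 + (real (Suc n) - real M) / real M) - (real (Suc n) - real M) / real M)"
proof -
  have M: "real M > 0" using assms by simp
  have e1: "1 + (real (Suc n) - real M) / real M = real (Suc n) / real M" using M by (simp add: field_simps)
  have e2: "ln (real (Suc n) / real M) = ln (real (Suc n)) - ln (real M)" using M by (simp add: ln_div del: of_nat_Suc)
  have e3: "ln (a / real M) = ln a - ln (real M)" using M assms by (simp add: ln_div)
  show ?thesis unfolding ln_poisson_remainder_def ln_poisson_Suc ln_poisson_taylor_def e1 e2 e3 using M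
    by (simp add: field_simps power2_eq_square)
qed

lemma ln_poisson_remainder_self: "ln_poisson_remainder a M M = 0"
  by (simp add: ln_poisson_remainder_def ln_poisson_taylor_def)

lemma ln_poisson_remainder_above:
  assumes "0 < a" "0 < M"
  shows "2 * (real k + 1) \<le> real M \<Longrightarrow> \<bar>ln_poisson_remainder a M (M + k)\<bar> \<le> 2 * real k * ((real k + 1) / real M)\<^sup>2"
proof (induction k)
  case 0 then show ?case by (simp add: ln_poisson_remainder_self)
next
  case (Suc k)
  have M: "real M > 0" using assms by simp
  define y where "y = (real (Suc (M + k)) - real M) / real M"
  have y: "y = (real k + 1) / real M" unfolding y_def by simp
  have yb: "\<bar>y\<bar> \<le> 1/2" using Suc.prems M unfolding y by (simp add: field_simps)
  have st: "\<bar>ln_poisson_remainder a M (Suc (M + k)) - ln_poisson_remainder a M (M + k)\<bar> \<le> 2 * y\<^sup>2"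
    using ln_poisson_remainder_Suc_diff[OF assms, of "M + k"] abs_ln_one_plus_x_minus_x_bound[OF yb] unfolding y_def by simp
  have IH: "\<bar>ln_poisson_remainder a M (M + k)\<bar> \<le> 2 * real k * ((real k + 1) / real M)\<^sup>2" using Suc by simp
  have "\<bar>ln_poisson_remainder a M (M + Suc k)\<bar> \<le> 2 * real k * ((real k + 1) / real M)\<^sup>2 + 2 * ((real k + 1) / real M)\<^sup>2"
    using st IH unfolding y by simp
  also have "\<dots> = 2 * (real k + 1) * ((real k + 1) / real M)\<^sup>2" by (simp add: algebra_simps)
  also have "\<dots> \<le> 2 * (real k + 1) * ((real k + 2) / real M)\<^sup>2"
    using M by (intro mult_left_mono power_mono divide_right_mono) auto
  finally show ?case by (simp add: add.commute)
qed

lemma ln_poisson_remainder_below: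
  assumes "0 < a" "0 < M"
  shows "k \<le> M \<Longrightarrow> 2 * (real k + 1) \<le> real M \<Longrightarrow> \<bar>ln_poisson_remainder a M (M - k)\<bar> \<le> 2 * real k * ((real k + 1) / real M)\<^sup>2"
proof (induction k)
  case 0 then show ?case by (simp add: ln_poisson_remainder_self)
next
  case (Suc k)
  have M: "real M > 0" using assms by simp
  define n where "n = M - Suc k"
  have nS: "Suc n = M - k" using Suc.prems unfolding n_def by simp
  define y where "y = (real (Suc n) - real M) / real M"
  have y: "y = - real k / real M" unfolding y_def nS using Suc.prems by (simp add: of_nat_diff)
  have yb: "\<bar>y\<bar> \<le> 1/2" using Suc.prems M unfolding y by (simp add: field_simps)
  have st: "\<bar>ln_poisson_remainder a M (Suc n) - ln_poisson_remainder a M n\<bar> \<le> 2 * y\<^sup>2"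
    using ln_poisson_remainder_Suc_diff[OF assms, of n] abs_ln_one_plus_x_minus_x_bound[OF yb] unfolding y_def by simp
  have IH: "\<bar>ln_poisson_remainder a M (M - k)\<bar> \<le> 2 * real k * ((real k + 1) / real M)\<^sup>2" using Suc by simp
  have "\<bar>ln_poisson_remainder a M n\<bar> \<le> 2 * real k * ((real k + 1) / real M)\<^sup>2 + 2 * ((real k + 1) / real M)\<^sup>2"
  proof -
    have "y\<^sup>2 \<le> ((real k + 1) / real M)\<^sup>2" unfolding y using M
      by (simp add: power_divide divide_right_mono power_mono)
    then show ?thesis using st IH nS by simp
  qed
  also have "\<dots> = 2 * (real k + 1) * ((real k + 1) / real M)\<^sup>2" by (simp add: algebra_simps)
  also have "\<dots> \<le> 2 * (real k + 1) * ((real k + 2) / real M)\<^sup>2"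
    using M by (intro mult_left_mono power_mono divide_right_mono) auto
  finally show ?case by (simp add: n_def add.commute)
qed

lemma ln_poisson_remainder_bound:
  assumes "0 < a" "0 < M" "2 * (\<bar>real n - real M\<bar> + 1) \<le> real M"
  shows "\<bar>ln_poisson_remainder a M n\<bar> \<le> 2 * \<bar>real n - real M\<bar> * ((\<bar>real n - real M\<bar> + 1) / real M)\<^sup>2"
proof (cases "M \<le> n")
  case True
  define k where "k = n - M"
  have n: "n = M + k" using True by (simp add: k_def)
  have "\<bar>real n - real M\<bar> = real k" using n by simp
  then show ?thesis using ln_poisson_remainder_above[OF assms(1,2), of k] assms(3) n by simp
next
  case False
  define k where "k = M - n"
  have n: "n = M - k" "k \<le> M" using False by (simp_all add: k_def)
  have "\<bar>real n - real M\<bar> = real k" using False by (simp add: k_def of_nat_diff)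
  then show ?thesis using ln_poisson_remainder_below[OF assms(1,2), of k] assms(3) n by simp
qed

lemma ln_poisson_Suc_diff: "0 < a \<Longrightarrow> ln_poisson a (Suc n) - ln_poisson a n = ln (a / real (Suc n))"
  by (simp add: ln_poisson_Suc ln_div del: of_nat_Suc)

lemma telescoping_le:
  fixes f g :: "nat \<Rightarrow> real"
  assumes "\<And>k. k < n \<Longrightarrow> f (Suc k) - f k \<le> g (Suc k) - g k - d"
  shows "f n - f 0 \<le> g n - g 0 - real n * d"
  using assms
proof (induction n)
  case (Suc n)
  then have "f n - f 0 \<le> g n - g 0 - real n * d" by simp
  moreover have "f (Suc n) - f n \<le> g (Suc n) - g n - d" using Suc.prems by simp
  moreover have "real (Suc n) * d = real n * d + d" by (simp add: distrib_right)
  ultimately show ?case by linarith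
qed simp

text \<open>Away from the centre the log-weight \<open>ln_poisson a\<close> decays with slope at least \<open>1 / (2 s)\<close>;
  within \<open>(B + 1) s\<close> of \<open>M\<close> it can increase by at most \<open>2 B / s\<close> per step.\<close>

locale ln_poisson_window =
  fixes a B s :: real and M :: nat
  assumes M_pos: "0 < M" and s_eq: "s = sqrt (real M)" and B_nonneg: "0 \<le> B"
    and a_close: "\<bar>a - real M\<bar> \<le> B * s" and s_large: "2 * B + 2 \<le> s"
begin

definition "growth k = (2 * B + 1/2) * min (real k) ((B + 1) * s + 1) / s"

lemma s_pos: "0 < s"
  using s_large B_nonneg by simp

lemma s_sq: "s * s = real M"
  using s_eq by simp

lemma Bs_le: "B * s \<le> real M / 2"
proof -
  have "2 * B * s \<le> s * s" using s_large s_pos by (intro mult_right_mono) auto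
  then show ?thesis using s_sq by simp
qed

lemma a_ge: "real M / 2 \<le> a"
  using a_close Bs_le by (simp add: abs_le_iff)

lemma a_pos: "0 < a"
  using a_ge M_pos by simp

lemma growth_0: "growth 0 = 0"
  using s_pos B_nonneg by (simp add: growth_def)

lemma growth_le: "growth k \<le> (2 * B + 1/2) * (B + 2)"
proof -
  have "growth k \<le> (2 * B + 1/2) * ((B + 1) * s + 1) / s"
    unfolding growth_def using s_pos B_nonneg by (intro divide_right_mono mult_left_mono) auto
  also have "\<dots> = (2 * B + 1/2) * ((B + 1) + 1 / s)" using s_pos by (simp add: field_simps)
  also have "\<dots> \<le> (2 * B + 1/2) * (B + 2)"
    using s_large B_nonneg by (intro mult_left_mono) (auto simp: field_simps)
  finally show ?thesis .
qed

lemma growth_Suc: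
  assumes "real k < (B + 1) * s"
  shows "growth (Suc k) - growth k = (2 * B + 1/2) / s"
  using assms s_pos by (simp add: growth_def field_simps)

lemma growth_mono: "growth k \<le> growth (Suc k)"
  unfolding growth_def using s_pos B_nonneg by (intro divide_right_mono mult_left_mono) auto

lemma step_above:
  "ln_poisson a (M + Suc k) - ln_poisson a (M + k) \<le> growth (Suc k) - growth k - 1 / (2 * s)"
proof -
  define z where "z = a / real (Suc (M + k))"
  have den: "0 < real (Suc (M + k))" by simp
  have inc: "ln_poisson a (M + Suc k) - ln_poisson a (M + k) \<le> z - 1"
    using ln_poisson_Suc_diff[OF a_pos, of "M + k"] ln_le_minus_one[of z] a_pos unfolding z_def by simp
  show ?thesis
  proof (cases "real k + 1 < (B + 1) * s")
    case True
    have "z - 1 = (a - real M - real k - 1) / real (Suc (M + k))"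
      unfolding z_def using den by (simp add: field_simps)
    also have "\<dots> \<le> max 0 (B * s) / (s * s)"
      using a_close den s_sq B_nonneg s_pos M_pos
      by (intro frac_le) (auto simp: max_def abs_le_iff)
    also have "\<dots> = B / s" using s_pos B_nonneg by (simp add: max_def)
    finally have "z - 1 \<le> B / s" .
    moreover have "B / s \<le> (2 * B + 1/2) / s - 1 / (2 * s)"
      using s_pos B_nonneg by (simp add: field_simps)
    ultimately show ?thesis using inc growth_Suc[of k] True by linarith
  next
    case False
    have dp: "0 < real M + (B + 1) * s" using M_pos B_nonneg s_pos by (simp add: add_pos_nonneg)
    have "z \<le> (real M + B * s) / (real M + (B + 1) * s)"
      unfolding z_def using False a_close B_nonneg s_pos dp
      by (intro frac_le) (auto simp: abs_le_iff)
    also have "\<dots> = 1 - s / (real M + (B + 1) * s)"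
      using dp by (simp add: field_simps)
    also have "\<dots> \<le> 1 - s / (2 * real M)"
    proof -
      have "(B + 1) * s \<le> s * s" using s_large s_pos B_nonneg by (intro mult_right_mono) auto
      then have "real M + (B + 1) * s \<le> 2 * real M" using s_sq by simp
      then have "s / (2 * real M) \<le> s / (real M + (B + 1) * s)" using s_pos dp by (intro frac_le) auto
      then show ?thesis by simp
    qed
    also have "\<dots> = 1 - 1 / (2 * s)" using s_sq s_pos M_pos by (simp add: field_simps)
    finally have "z - 1 \<le> - 1 / (2 * s)" by simp
    then show ?thesis using inc growth_mono[of k] by linarith
  qed
qed

lemma step_below:
  assumes "k < M"
  shows "ln_poisson a (M - Suc k) - ln_poisson a (M - k) \<le> growth (Suc k) - growth k - 1 / (2 * s)"
proof -
  define n where "n = M - Suc k"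
  have nS: "Suc n = M - k" using assms by (simp add: n_def)
  define z where "z = real (M - k) / a"
  have zp: "0 < z" using assms a_pos by (simp add: z_def)
  have dec: "ln_poisson a (M - Suc k) - ln_poisson a (M - k) \<le> z - 1"
  proof -
    have "ln_poisson a (Suc n) - ln_poisson a n = ln (a / real (Suc n))" by (rule ln_poisson_Suc_diff[OF a_pos])
    then have "ln_poisson a n - ln_poisson a (Suc n) = ln z" unfolding z_def nS using a_pos assms by (simp add: ln_div)
    then show ?thesis using ln_le_minus_one[OF zp] nS by (simp add: n_def)
  qed
  show ?thesis
  proof (cases "real k < (B + 1) * s")
    case True
    have "z \<le> real M / a" unfolding z_def using a_pos by (intro divide_right_mono) auto
    then have "z - 1 \<le> real M / a - 1" by simp
    also have "\<dots> = (real M - a) / a" using a_pos by (simp add: field_simps)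
    also have "\<dots> \<le> max 0 (B * s) / (real M / 2)"
      using a_close a_ge a_pos B_nonneg s_pos M_pos by (intro frac_le) (auto simp: max_def abs_le_iff)
    also have "\<dots> = 2 * B / s" using s_pos s_sq B_nonneg M_pos by (simp add: max_def field_simps)
    finally have "z - 1 \<le> 2 * B / s" .
    moreover have "2 * B / s = (2 * B + 1/2) / s - 1 / (2 * s)"
      using s_pos by (simp add: field_simps)
    ultimately show ?thesis using dec growth_Suc[OF True] by linarith
  next
    case False
    have p1: "0 < real M - B * s" using Bs_le M_pos by simp
    have Mk: "real (M - k) \<le> real M - (B + 1) * s" using False assms by (simp add: of_nat_diff)
    have "z \<le> (real M - (B + 1) * s) / (real M - B * s)"
      unfolding z_def using Mk p1 a_close a_pos by (intro frac_le) (auto simp: abs_le_iff)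
    also have "\<dots> = 1 - s / (real M - B * s)" using p1 by (simp add: field_simps)
    also have "\<dots> \<le> 1 - s / real M"
    proof -
      have "s / real M \<le> s / (real M - B * s)"
        using p1 s_pos B_nonneg by (intro frac_le) (auto intro: mult_nonneg_nonneg)
      then show ?thesis by simp
    qed
    also have "\<dots> = 1 - 1 / s" using s_sq s_pos M_pos by (simp add: field_simps)
    finally have "z - 1 \<le> - 1 / (2 * s)" using s_pos by (simp add: field_simps)
    then show ?thesis using dec growth_mono[of k] by linarith
  qed
qed

lemma ln_poisson_ratio_le:
  "ln_poisson a n - ln_poisson a M \<le> (2 * B + 1/2) * (B + 2) - \<bar>real n - real M\<bar> / (2 * s)"
proof (cases "M \<le> n")
  case True
  then obtain k where n: "n = M + k" using le_Suc_ex by blast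
  have "ln_poisson a (M + k) - ln_poisson a (M + 0) \<le> growth k - growth 0 - real k * (1 / (2 * s))"
    by (rule telescoping_le[where f = "\<lambda>k. ln_poisson a (M + k)"]) (rule step_above)
  then show ?thesis using growth_le[of k] growth_0 n by simp
next
  case False
  define k where "k = M - n"
  have n: "n = M - k" "k \<le> M" using False by (simp_all add: k_def)
  have "ln_poisson a (M - k) - ln_poisson a (M - 0) \<le> growth k - growth 0 - real k * (1 / (2 * s))"
    by (rule telescoping_le[where f = "\<lambda>k. ln_poisson a (M - k)"]) (rule step_below, use n(2) in linarith)
  moreover have "\<bar>real n - real M\<bar> = real k" using n by (simp add: of_nat_diff)
  ultimately show ?thesis using growth_le[of k] growth_0 n by simp
qed

end

locale poisson_scaling =
  fixes N :: "nat \<Rightarrow> nat" and a :: "nat \<Rightarrow> real" and \<beta> :: real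
  assumes N_pos: "\<And>m. 0 < N m" and load_pos: "\<And>m. 0 < a m"
    and sqrt_N_lim: "filterlim (\<lambda>m. sqrt (real (N m))) at_top sequentially"
    and load_lim: "(\<lambda>m. (a m - real (N m)) / sqrt (real (N m))) \<longlonglongrightarrow> \<beta>"
begin

lemma sqrt_N_pos: "0 < sqrt (real (N m))" using N_pos by simp

lemma inverse_sqrt_N_tendsto_0: "(\<lambda>m. 1 / sqrt (real (N m))) \<longlonglongrightarrow> 0"
  using tendsto_inverse_0_at_top[OF sqrt_N_lim] by (simp add: divide_inverse)

lemma sqrt_N_mult_ln_ratio_tendsto: "(\<lambda>m. sqrt (real (N m)) * ln (a m / real (N m))) \<longlonglongrightarrow> \<beta>"
proof -
  define s where "s m = sqrt (real (N m))" for m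
  define b where "b m = (a m - real (N m)) / s m" for m
  define x where "x m = b m / s m" for m
  have sp: "0 < s m" for m using sqrt_N_pos by (simp add: s_def)
  have ss: "s m * s m = real (N m)" for m by (simp add: s_def)
  have "b = (\<lambda>m. (a m - real (N m)) / sqrt (real (N m)))" by (simp add: fun_eq_iff b_def s_def)
  then have b: "b \<longlonglongrightarrow> \<beta>" using load_lim by simp
  have is0: "(\<lambda>m. 1 / s m) \<longlonglongrightarrow> 0" using inverse_sqrt_N_tendsto_0 by (simp add: s_def)
  have x0: "x \<longlonglongrightarrow> 0" unfolding x_def using tendsto_mult[OF b is0] by simp
  have ax: "a m / real (N m) = 1 + x m" for m
    using sp[of m] ss[of m] N_pos[of m] by (simp add: x_def b_def field_simps)
  have sx: "s m * x m = b m" for m using sp[of m] by (simp add: x_def)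
  have dec: "s m * ln (a m / real (N m)) = b m + s m * (ln (1 + x m) - x m)" for m
    unfolding ax using sx[of m] by (simp add: algebra_simps)
  have ev: "eventually (\<lambda>m. \<bar>x m\<bar> \<le> 1/2) sequentially"
  proof -
    have "(\<lambda>m. \<bar>x m\<bar>) \<longlonglongrightarrow> 0" using tendsto_rabs[OF x0] by simp
    then have "eventually (\<lambda>m. \<bar>x m\<bar> < 1/2) sequentially" by (rule order_tendstoD) simp
    then show ?thesis by (rule eventually_mono) simp
  qed
  have r0: "(\<lambda>m. s m * (ln (1 + x m) - x m)) \<longlonglongrightarrow> 0"
  proof (rule Lim_null_comparison)
    show "eventually (\<lambda>m. norm (s m * (ln (1 + x m) - x m)) \<le> 2 * (b m)\<^sup>2 * (1 / s m)) sequentially"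
      using ev
    proof eventually_elim
      case (elim m)
      have "norm (s m * (ln (1 + x m) - x m)) = s m * \<bar>ln (1 + x m) - x m\<bar>"
        using sp[of m] by (simp add: abs_mult)
      also have "\<dots> \<le> s m * (2 * (x m)\<^sup>2)"
        using abs_ln_one_plus_x_minus_x_bound[OF elim] sp[of m] by (intro mult_left_mono) auto
      also have "\<dots> = 2 * (b m)\<^sup>2 * (1 / s m)"
        using sp[of m] by (simp add: x_def power2_eq_square field_simps)
      finally show ?case .
    qed
    show "(\<lambda>m. 2 * (b m)\<^sup>2 * (1 / s m)) \<longlonglongrightarrow> 0"
      using tendsto_mult[OF tendsto_mult[OF tendsto_const tendsto_power[OF b]] is0] by simp
  qed
  show ?thesis unfolding dec[unfolded s_def] using tendsto_add[OF b r0] by (simp add: s_def)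
qed

lemma deviation_eventually_small:
  fixes n :: "nat \<Rightarrow> nat"
  assumes nl: "(\<lambda>m. (real (n m) - real (N m)) / sqrt (real (N m))) \<longlonglongrightarrow> t"
  shows "eventually (\<lambda>m. 2 * (\<bar>real (n m) - real (N m)\<bar> + 1) \<le> real (N m)) sequentially"
proof -
  define s where "s m = sqrt (real (N m))" for m
  have sp: "0 < s m" for m using sqrt_N_pos by (simp add: s_def)
  have "(\<lambda>m. (\<bar>(real (n m) - real (N m)) / s m\<bar> + 1 / s m) * (1 / s m)) \<longlonglongrightarrow> (\<bar>t\<bar> + 0) * 0"
    using nl inverse_sqrt_N_tendsto_0 unfolding s_def by (intro tendsto_intros)
  then have "eventually (\<lambda>m. (\<bar>(real (n m) - real (N m)) / s m\<bar> + 1 / s m) * (1 / s m) < 1/2) sequentially"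
    by (intro order_tendstoD) auto
  then show ?thesis
  proof eventually_elim
    case (elim m)
    have "(\<bar>(real (n m) - real (N m)) / s m\<bar> + 1 / s m) * (1 / s m)
        = (\<bar>real (n m) - real (N m)\<bar> + 1) / real (N m)"
      using sp[of m] by (simp add: s_def abs_divide field_simps)
    with elim have "(\<bar>real (n m) - real (N m)\<bar> + 1) / real (N m) < 1/2" by (simp only:)
    then show ?case using N_pos[of m] by (simp add: pos_divide_less_eq)
  qed
qed

lemma ln_poisson_remainder_tendsto_0:
  fixes n :: "nat \<Rightarrow> nat"
  assumes nl: "(\<lambda>m. (real (n m) - real (N m)) / sqrt (real (N m))) \<longlonglongrightarrow> t"
  shows "(\<lambda>m. ln_poisson_remainder (a m) (N m) (n m)) \<longlonglongrightarrow> 0"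
proof (rule Lim_null_comparison)
  define s where "s m = sqrt (real (N m))" for m
  define J where "J m = (real (n m) - real (N m)) / s m" for m
  have sp: "0 < s m" for m using sqrt_N_pos by (simp add: s_def)
  have ss: "s m * s m = real (N m)" for m by (simp add: s_def)
  have Jt: "J \<longlonglongrightarrow> t" unfolding J_def s_def by (rule nl)
  have is0: "(\<lambda>m. 1 / s m) \<longlonglongrightarrow> 0" using inverse_sqrt_N_tendsto_0 by (simp add: s_def)
  have bound_eq: "2 * \<bar>real (n m) - real (N m)\<bar> * ((\<bar>real (n m) - real (N m)\<bar> + 1) / real (N m))\<^sup>2
      = 2 * \<bar>J m\<bar> * (\<bar>J m\<bar> + 1 / s m)\<^sup>2 * (1 / s m)" for m
  proof -
    have e1: "\<bar>real (n m) - real (N m)\<bar> = \<bar>J m\<bar> * s m" using sp[of m] by (simp add: J_def abs_divide)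
    have e2: "(\<bar>J m\<bar> * s m + 1) / real (N m) = (\<bar>J m\<bar> + 1 / s m) * (1 / s m)"
      unfolding ss[symmetric] using sp[of m] by (simp add: field_simps)
    have e3: "s m * (1 / s m)\<^sup>2 = 1 / s m" using sp[of m] by (simp add: power2_eq_square)
    have "2 * (\<bar>J m\<bar> * s m) * ((\<bar>J m\<bar> + 1 / s m) * (1 / s m))\<^sup>2
        = 2 * \<bar>J m\<bar> * (\<bar>J m\<bar> + 1 / s m)\<^sup>2 * (s m * (1 / s m)\<^sup>2)"
      by (simp only: power_mult_distrib mult_ac)
    then show ?thesis unfolding e1 e2 e3 .
  qed
  show "eventually (\<lambda>m. norm (ln_poisson_remainder (a m) (N m) (n m))
      \<le> 2 * \<bar>J m\<bar> * (\<bar>J m\<bar> + 1 / s m)\<^sup>2 * (1 / s m)) sequentially"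
    using deviation_eventually_small[OF nl]
  proof eventually_elim
    case (elim m)
    then show ?case using ln_poisson_remainder_bound[OF load_pos N_pos elim] bound_eq[of m] by simp
  qed
  show "(\<lambda>m. 2 * \<bar>J m\<bar> * (\<bar>J m\<bar> + 1 / s m)\<^sup>2 * (1 / s m)) \<longlonglongrightarrow> 0"
    using tendsto_mult[OF tendsto_mult[OF tendsto_mult[OF tendsto_const[of 2] tendsto_rabs[OF Jt]]
        tendsto_power[OF tendsto_add[OF tendsto_rabs[OF Jt] is0], of 2]] is0]
    by simp
qed

lemma ln_poisson_taylor_tendsto:
  fixes n :: "nat \<Rightarrow> nat"
  assumes nl: "(\<lambda>m. (real (n m) - real (N m)) / sqrt (real (N m))) \<longlonglongrightarrow> t"
  shows "(\<lambda>m. ln_poisson_taylor (a m) (real (N m)) (real (n m) - real (N m))) \<longlonglongrightarrow> \<beta> * t - t\<^sup>2 / 2"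
proof -
  define s where "s m = sqrt (real (N m))" for m
  define J where "J m = (real (n m) - real (N m)) / s m" for m
  have sp: "0 < s m" for m using sqrt_N_pos by (simp add: s_def)
  have ss: "s m * s m = real (N m)" for m by (simp add: s_def)
  have Jt: "J \<longlonglongrightarrow> t" unfolding J_def s_def by (rule nl)
  have is0: "(\<lambda>m. 1 / s m) \<longlonglongrightarrow> 0" using inverse_sqrt_N_tendsto_0 by (simp add: s_def)
  have sl: "(\<lambda>m. s m * ln (a m / real (N m))) \<longlonglongrightarrow> \<beta>"
    using sqrt_N_mult_ln_ratio_tendsto by (simp add: s_def)
  have nJ: "real (n m) - real (N m) = J m * s m" for m using sp[of m] by (simp add: J_def)
  have "ln_poisson_taylor (a m) (real (N m)) (real (n m) - real (N m))
      = J m * (s m * ln (a m / real (N m))) - ((J m)\<^sup>2 + J m * (1 / s m)) / 2" for m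
  proof -
    have "(J m * s m)\<^sup>2 / (2 * real (N m)) = (J m)\<^sup>2 / 2"
      unfolding ss[symmetric] using sp[of m] by (simp add: power2_eq_square)
    moreover have "J m * s m / (2 * real (N m)) = J m * (1 / s m) / 2"
      unfolding ss[symmetric] using sp[of m] by simp
    ultimately show ?thesis unfolding ln_poisson_taylor_def nJ by (simp add: add_divide_distrib ac_simps)
  qed
  moreover have "(\<lambda>m. J m * (s m * ln (a m / real (N m))) - ((J m)\<^sup>2 + J m * (1 / s m)) / 2)
      \<longlonglongrightarrow> t * \<beta> - (t\<^sup>2 + t * 0) / 2"
    by (intro tendsto_intros Jt sl is0) simp
  ultimately show ?thesis by (simp add: mult.commute)
qed

lemma ln_poisson_local_limit:
  fixes n :: "nat \<Rightarrow> nat"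
  assumes nl: "(\<lambda>m. (real (n m) - real (N m)) / sqrt (real (N m))) \<longlonglongrightarrow> t"
  shows "(\<lambda>m. exp (ln_poisson (a m) (n m) - ln_poisson (a m) (N m))) \<longlonglongrightarrow> exp (\<beta> * t - t\<^sup>2 / 2)"
proof -
  have "ln_poisson (a m) (n m) - ln_poisson (a m) (N m)
      = ln_poisson_remainder (a m) (N m) (n m) + ln_poisson_taylor (a m) (real (N m)) (real (n m) - real (N m))" for m
    by (simp add: ln_poisson_remainder_def)
  then show ?thesis
    using tendsto_exp[OF tendsto_add[OF ln_poisson_remainder_tendsto_0[OF nl] ln_poisson_taylor_tendsto[OF nl]]]
    by simp
qed

lemma ln_poisson_ratio_bound:
  "\<exists>C. eventually (\<lambda>m. \<forall>n. ln_poisson (a m) n - ln_poisson (a m) (N m)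
      \<le> C - \<bar>real n - real (N m)\<bar> / (2 * sqrt (real (N m)))) sequentially"
proof -
  define B where "B = \<bar>\<beta>\<bar> + 1"
  have "eventually (\<lambda>m. \<bar>(a m - real (N m)) / sqrt (real (N m))\<bar> < B) sequentially"
    using tendsto_rabs[OF load_lim] by (rule order_tendstoD) (simp add: B_def)
  moreover have "eventually (\<lambda>m. 2 * B + 2 \<le> sqrt (real (N m))) sequentially"
    using sqrt_N_lim by (simp add: filterlim_at_top)
  ultimately have "eventually (\<lambda>m. \<forall>n. ln_poisson (a m) n - ln_poisson (a m) (N m)
      \<le> (2 * B + 1/2) * (B + 2) - \<bar>real n - real (N m)\<bar> / (2 * sqrt (real (N m)))) sequentially"
  proof eventually_elim
    case (elim m)
    then have "\<bar>a m - real (N m)\<bar> \<le> B * sqrt (real (N m))"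
      using sqrt_N_pos[of m] by (simp add: abs_divide pos_divide_less_eq)
    then interpret ln_poisson_window "a m" B "sqrt (real (N m))" "N m"
      using N_pos elim(2) by unfold_locales (auto simp: B_def)
    show ?case using ln_poisson_ratio_le by blast
  qed
  then show ?thesis by blast
qed

definition profile :: "nat \<Rightarrow> nat \<Rightarrow> real" where
  "profile m n = exp (ln_poisson (a m) n - ln_poisson (a m) (N m)) / (sqrt (2 * pi) * exp (\<beta>\<^sup>2 / 2))"

lemma profile_nonneg: "0 \<le> profile m n"
  by (simp add: profile_def)

lemma profile_tendsto:
  assumes "(\<lambda>m. (real (n m) - real (N m)) / sqrt (real (N m))) \<longlonglongrightarrow> t"
  shows "(\<lambda>m. profile m (n m)) \<longlonglongrightarrow> std_normal_density (t - \<beta>)"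
  unfolding profile_def exp_quadratic_eq_std_normal_density[symmetric]
  by (intro tendsto_divide tendsto_const ln_poisson_local_limit[OF assms]) simp

lemma profile_bound:
  "\<exists>D. eventually (\<lambda>m. \<forall>n. profile m n \<le> D * exp (- \<bar>real n - real (N m)\<bar> / (2 * sqrt (real (N m))))) sequentially"
proof -
  define K where "K = sqrt (2 * pi) * exp (\<beta>\<^sup>2 / 2)"
  have K: "0 < K" by (simp add: K_def)
  obtain C where "eventually (\<lambda>m. \<forall>n. ln_poisson (a m) n - ln_poisson (a m) (N m)
      \<le> C - \<bar>real n - real (N m)\<bar> / (2 * sqrt (real (N m)))) sequentially"
    using ln_poisson_ratio_bound by blast
  then have "eventually (\<lambda>m. \<forall>n. profile m n \<le> exp C / K * exp (- \<bar>real n - real (N m)\<bar> / (2 * sqrt (real (N m))))) sequentially"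
  proof eventually_elim
    case (elim m)
    show ?case
    proof
      fix n
      have "exp (ln_poisson (a m) n - ln_poisson (a m) (N m)) \<le> exp C * exp (- \<bar>real n - real (N m)\<bar> / (2 * sqrt (real (N m))))"
        using elim by (simp add: exp_add[symmetric])
      then show "profile m n \<le> exp C / K * exp (- \<bar>real n - real (N m)\<bar> / (2 * sqrt (real (N m))))"
        using K unfolding profile_def K_def[symmetric] by (simp add: divide_right_mono)
    qed
  qed
  then show ?thesis by blast
qed

lemma profile_bounded: "\<exists>D. eventually (\<lambda>m. \<forall>n. profile m n \<le> D) sequentially"
proof -
  obtain D where D: "eventually (\<lambda>m. \<forall>n. profile m n \<le> D * exp (- \<bar>real n - real (N m)\<bar> / (2 * sqrt (real (N m))))) sequentially"
    using profile_bound by blast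
  have le_D: "profile m n \<le> D" if "profile m n \<le> D * exp (- \<bar>real n - real (N m)\<bar> / (2 * sqrt (real (N m))))" for m n
  proof -
    have "0 \<le> D * exp (- \<bar>real n - real (N m)\<bar> / (2 * sqrt (real (N m))))"
      using that profile_nonneg[of m n] by linarith
    then have "0 \<le> D" by (simp add: zero_le_mult_iff)
    then have "D * exp (- \<bar>real n - real (N m)\<bar> / (2 * sqrt (real (N m)))) \<le> D * 1"
      using sqrt_N_pos[of m] by (intro mult_left_mono) auto
    with that show ?thesis by simp
  qed
  have "eventually (\<lambda>m. \<forall>n. profile m n \<le> D) sequentially"
    using D by (rule eventually_mono) (use le_D in blast)
  then show ?thesis by blast
qed

lemma sum_profile_tendsto_integral:
  fixes g :: "nat \<Rightarrow> nat \<Rightarrow> real" and L :: "nat \<Rightarrow> nat" and G :: "real \<Rightarrow> real"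
  assumes zero: "\<And>m n. L m < n \<Longrightarrow> g m n = 0"
    and bounded: "eventually (\<lambda>m. \<forall>n. \<bar>g m n\<bar> \<le> K) sequentially"
    and lim: "\<And>n t. t \<notin> E \<Longrightarrow> (\<lambda>m. (real (n m) - real (N m)) / sqrt (real (N m))) \<longlonglongrightarrow> t
      \<Longrightarrow> (\<lambda>m. g m (n m)) \<longlonglongrightarrow> G t"
    and E: "finite E" and G: "G \<in> borel_measurable lborel"
  shows "(\<lambda>m. (\<Sum>n\<le>L m. profile m n * g m n) / sqrt (real (N m)))
    \<longlonglongrightarrow> (LINT t|lborel. std_normal_density (t - \<beta>) * G t)"
proof -
  obtain D where D: "eventually (\<lambda>m. \<forall>n. profile m n \<le> D * exp (- \<bar>real n - real (N m)\<bar> / (2 * sqrt (real (N m))))) sequentially"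
    using profile_bound by blast
  show ?thesis
  proof (rule scaled_sum_tendsto_integral[where C = "\<lambda>m. real (N m)" and D = "K * D"])
    show "filterlim (\<lambda>m. sqrt (real (N m))) at_top sequentially" by (rule sqrt_N_lim)
    show "0 < sqrt (real (N m))" for m by (rule sqrt_N_pos)
    have "real (N m) / sqrt (real (N m)) = sqrt (real (N m))" for m
      using N_pos[of m] by (simp add: real_div_sqrt)
    then have NC: "filterlim (\<lambda>m. real (N m) / sqrt (real (N m))) at_top sequentially"
      using sqrt_N_lim by simp
    then show "filterlim (\<lambda>m. real (N m) / sqrt (real (N m))) at_top sequentially" .
    show "L m < n \<Longrightarrow> profile m n * g m n = 0" for m n using zero by simp
    show "eventually (\<lambda>m. \<forall>n. \<bar>profile m n * g m n\<bar> \<le> K * D * exp (- \<bar>real n - real (N m)\<bar> / (2 * sqrt (real (N m))))) sequentially"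
      using D bounded
    proof eventually_elim
      case (elim m)
      have "0 \<le> K" using elim(2) by (meson abs_ge_zero order_trans)
      show ?case
      proof
        fix n
        have "\<bar>profile m n * g m n\<bar> \<le> profile m n * K"
          using elim(2) profile_nonneg[of m n] by (simp add: abs_mult mult_left_mono)
        also have "\<dots> \<le> D * exp (- \<bar>real n - real (N m)\<bar> / (2 * sqrt (real (N m)))) * K"
          using elim(1) \<open>0 \<le> K\<close> by (intro mult_right_mono) auto
        finally show "\<bar>profile m n * g m n\<bar> \<le> K * D * exp (- \<bar>real n - real (N m)\<bar> / (2 * sqrt (real (N m))))"
          by (simp add: ac_simps)
      qed
    qed
    show "finite E" by (rule E)
    show "(\<lambda>t. std_normal_density (t - \<beta>) * G t) \<in> borel_measurable lborel" using G by measurable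
    fix t assume t: "t \<notin> E"
    have "(\<lambda>m. (real (nat \<lfloor>real (N m) + sqrt (real (N m)) * t\<rfloor>) - real (N m)) / sqrt (real (N m))) \<longlonglongrightarrow> t"
      by (rule floor_scaled_tendsto[OF sqrt_N_lim sqrt_N_pos NC])
    then show "(\<lambda>m. profile m (nat \<lfloor>real (N m) + sqrt (real (N m)) * t\<rfloor>) * g m (nat \<lfloor>real (N m) + sqrt (real (N m)) * t\<rfloor>))
        \<longlonglongrightarrow> std_normal_density (t - \<beta>) * G t"
      by (intro tendsto_mult profile_tendsto lim[OF t])
  qed
qed

end

section \<open>The square-root scaling regime\<close>

lemma sum_atMost_le_of_zero_beyond:
  fixes f :: "nat \<Rightarrow> real"
  assumes "\<And>n. 0 \<le> f n" "\<And>n. B < n \<Longrightarrow> f n = 0"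
  shows "(\<Sum>n\<le>c. f n) \<le> (\<Sum>n\<le>B. f n)"
proof -
  have "(\<Sum>n\<le>c. f n) = (\<Sum>n\<in>{..c} \<inter> {..B}. f n)"
  proof (rule sum.mono_neutral_right)
    show "\<forall>i\<in>{..c} - {..c} \<inter> {..B}. f i = 0"
    proof
      fix i assume "i \<in> {..c} - {..c} \<inter> {..B}"
      then have "B < i" by auto
      then show "f i = 0" by (rule assms(2))
    qed
  qed auto
  also have "\<dots> \<le> (\<Sum>n\<le>B. f n)"
    by (rule sum_mono2) (use assms(1) in auto)
  finally show ?thesis .
qed

lemma indicator_atMost_mult: "indicator {..c::real} t * indicator {..d} t = (indicator {..min c d} t :: real)"
  by (auto simp: indicator_def min_def)

lemma sum_triangle_swap:
  fixes f g :: "nat \<Rightarrow> real"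
  shows "(\<Sum>a\<le>T. g a * (\<Sum>b\<le>T-a. f b)) = (\<Sum>b\<le>T. f b * (\<Sum>a\<le>T-b. g a))"
proof -
  have "(\<Sum>a\<le>T. g a * (\<Sum>b\<le>T-a. f b)) = (\<Sum>(a,b)\<in>Sigma {..T} (\<lambda>a. {..T-a}). g a * f b)"
    by (simp only: sum_distrib_left) (rule sum.Sigma; auto)
  also have "Sigma {..T} (\<lambda>a. {..T-a}) = prod.swap ` Sigma {..T} (\<lambda>b. {..T-b})"
    by (auto simp: image_iff)
  also have "(\<Sum>(a,b)\<in>prod.swap ` Sigma {..T} (\<lambda>b. {..T-b}). g a * f b)
      = (\<Sum>(b,a)\<in>Sigma {..T} (\<lambda>b. {..T-b}). f b * g a)"
    by (subst sum.reindex) (auto simp: case_prod_beta mult.commute)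
  also have "\<dots> = (\<Sum>b\<le>T. f b * (\<Sum>a\<le>T-b. g a))"
    by (simp only: sum_distrib_left) (rule sum.Sigma[symmetric]; auto)
  finally show ?thesis .
qed

lemma set_integral_reflect:
  fixes F :: "real \<Rightarrow> real"
  shows "(LBINT x:{a..b}. F x) = (LBINT x:{-b..-a}. F (- x))"
proof -
  have "(LINT x|lborel. indicator {a..b} x *\<^sub>R F x) = (LINT x|lborel. indicator {a..b} (- x) *\<^sub>R F (- x))"
    using lborel_integral_real_affine[of "-1" "\<lambda>x. indicator {a..b} x *\<^sub>R F x" 0] by simp
  moreover have "indicator {a..b} (- x) = (indicator {-b..-a} x :: real)" for x
    by (auto simp: indicator_def)
  ultimately show ?thesis unfolding set_lebesgue_integral_def by simp
qed

lemma integral_rescale_sqrt: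
  fixes g :: "real \<Rightarrow> real"
  assumes "0 < a"
  shows "(LINT t|lborel. g t) = (LINT x|lborel. g (x / sqrt a)) / sqrt a"
  using lborel_integral_real_affine[of "1 / sqrt a" g 0] assms by simp

lemma asymp_equiv_of_sqrt_mult_tendsto:
  fixes f N :: "nat \<Rightarrow> real"
  assumes N: "\<And>m. 0 < N m" and lim: "(\<lambda>m. sqrt (N m) * f m) \<longlonglongrightarrow> c" and c: "c \<noteq> 0"
  shows "f \<sim>[sequentially] (\<lambda>m. 1 / sqrt (N m) * c)"
proof (rule asymp_equivI')
  have "(\<lambda>m. sqrt (N m) * f m / c) \<longlonglongrightarrow> c / c" by (intro tendsto_divide lim tendsto_const c)
  moreover have "sqrt (N m) * f m / c = f m / (1 / sqrt (N m) * c)" for m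
    using N[of m] c by (simp add: field_simps)
  ultimately show "(\<lambda>m. f m / (1 / sqrt (N m) * c)) \<longlonglongrightarrow> 1" using c by simp
qed

lemma smallo_imp_tendsto_ratio:
  fixes x s :: "nat \<Rightarrow> real"
  assumes "(\<lambda>m. x m - c * s m) \<in> o(s)" and "\<And>m. 0 < s m"
  shows "(\<lambda>m. x m / s m) \<longlonglongrightarrow> c"
proof -
  have "(\<lambda>m. (x m - c * s m) / s m + c) \<longlonglongrightarrow> 0 + c"
    by (intro tendsto_add smalloD_tendsto[OF assms(1)] tendsto_const)
  moreover have "(x m - c * s m) / s m + c = x m / s m" for m
    using assms(2)[of m] by (simp add: field_simps)
  ultimately show ?thesis by simp
qed

locale bo_scaling =
  fixes \<alpha>1 \<alpha>2 \<beta>1 \<beta>2 \<gamma>1 \<gamma>2 :: real and N :: "nat \<Rightarrow> real" and N1 N2 :: "nat \<Rightarrow> nat"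
    and k1 k2 l1 l2 u1 u2 :: "nat \<Rightarrow> real"
  assumes alpha1_pos: "0 < \<alpha>1" and alpha2_pos: "0 < \<alpha>2"
    and gamma1_nonneg: "0 \<le> \<gamma>1" and gamma2_nonneg: "0 \<le> \<gamma>2"
    and N_lim: "filterlim N at_top sequentially"
    and N1_pos: "\<And>m. 0 < N1 m" and N2_pos: "\<And>m. 0 < N2 m"
    and N1_eq: "\<And>m. real (N1 m) = \<alpha>1 * N m" and N2_eq: "\<And>m. real (N2 m) = \<alpha>2 * N m"
    and l1_pos: "\<And>m. 0 < l1 m" and l2_pos: "\<And>m. 0 < l2 m"
    and u1_pos: "\<And>m. 0 < u1 m" and u2_pos: "\<And>m. 0 < u2 m"
    and k1_nonneg: "\<And>m. 0 \<le> k1 m" and k2_nonneg: "\<And>m. 0 \<le> k2 m"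
    and load1_lim: "(\<lambda>m. (l1 m / u1 m - real (N1 m)) / sqrt (real (N1 m))) \<longlonglongrightarrow> \<beta>1"
    and load2_lim: "(\<lambda>m. (l2 m / u2 m - real (N2 m)) / sqrt (real (N2 m))) \<longlonglongrightarrow> \<beta>2"
    and k1_lim: "(\<lambda>m. k1 m / sqrt (real (N1 m))) \<longlonglongrightarrow> \<gamma>1"
    and k2_lim: "(\<lambda>m. k2 m / sqrt (real (N2 m))) \<longlonglongrightarrow> \<gamma>2"
begin

definition "s1 m = sqrt (real (N1 m))"
definition "s2 m = sqrt (real (N2 m))"
definition "r = sqrt (\<alpha>1 / \<alpha>2)"
definition "c1 = \<gamma>2 * sqrt (\<alpha>2 / \<alpha>1)"
definition "c2 = \<gamma>1 * sqrt (\<alpha>1 / \<alpha>2)"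
definition "T m = N1 m + N2 m"
definition "M1 m = N1 m + nat \<lfloor>k2 m\<rfloor>"

lemma N_pos: "0 < N m"
proof -
  have "0 < \<alpha>1 * N m" using N1_pos[of m] N1_eq[of m] by (metis of_nat_0_less_iff)
  then show ?thesis using alpha1_pos by (simp add: zero_less_mult_iff)
qed

lemma s1_pos: "0 < s1 m" using N1_pos by (simp add: s1_def)
lemma s2_pos: "0 < s2 m" using N2_pos by (simp add: s2_def)
lemma r_pos: "0 < r" using alpha1_pos alpha2_pos by (simp add: r_def)

lemma s1_eq_r_s2: "s1 m = r * s2 m"
proof -
  have "r * s2 m = sqrt (\<alpha>1 / \<alpha>2 * (\<alpha>2 * N m))" by (simp only: r_def s2_def N2_eq real_sqrt_mult)
  also have "\<alpha>1 / \<alpha>2 * (\<alpha>2 * N m) = \<alpha>1 * N m" using alpha2_pos by simp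
  finally show ?thesis by (simp add: s1_def N1_eq)
qed

lemma s1_eq: "s1 m = sqrt \<alpha>1 * sqrt (N m)" by (simp add: s1_def N1_eq real_sqrt_mult)
lemma s2_eq: "s2 m = sqrt \<alpha>2 * sqrt (N m)" by (simp add: s2_def N2_eq real_sqrt_mult)

lemma c1_nonneg: "0 \<le> c1" using gamma2_nonneg alpha1_pos alpha2_pos by (simp add: c1_def)
lemma c2_eq: "c2 = r * \<gamma>1" by (simp add: c2_def r_def)
lemma c2_nonneg: "0 \<le> c2" using gamma1_nonneg r_pos by (simp add: c2_eq)

lemma s1_lim: "filterlim s1 at_top sequentially"
  unfolding s1_eq using alpha1_pos
  by (intro filterlim_tendsto_pos_mult_at_top[OF tendsto_const _ filterlim_compose[OF sqrt_at_top N_lim]]) auto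

lemma s2_lim: "filterlim s2 at_top sequentially"
  unfolding s2_eq using alpha2_pos
  by (intro filterlim_tendsto_pos_mult_at_top[OF tendsto_const _ filterlim_compose[OF sqrt_at_top N_lim]]) auto

lemma inverse_s2_tendsto_0: "(\<lambda>m. 1 / s2 m) \<longlonglongrightarrow> 0"
  using tendsto_inverse_0_at_top[OF s2_lim] by (simp add: divide_inverse)

lemma N2_div_s2_lim: "filterlim (\<lambda>m. real (N2 m) / s2 m) at_top sequentially"
proof -
  have "real (N2 m) / s2 m = s2 m" for m using N2_pos[of m] by (simp add: s2_def real_div_sqrt)
  then show ?thesis using s2_lim by simp
qed

lemma N2_div_s1_lim: "filterlim (\<lambda>m. real (N2 m) / s1 m) at_top sequentially"
proof -
  have "(\<lambda>m. real (N2 m) / s1 m) = (\<lambda>m. (real (N2 m) / s2 m) * (1 / r))"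
    by (rule ext) (simp add: s1_eq_r_s2 mult.commute)
  then show ?thesis
    using r_pos by (simp only:) (intro filterlim_at_top_mult_tendsto_pos[OF tendsto_const _ N2_div_s2_lim], simp)
qed

sublocale p1: poisson_scaling N1 "\<lambda>m. l1 m / u1 m" \<beta>1
  by unfold_locales (use N1_pos l1_pos u1_pos load1_lim s1_lim[unfolded s1_def[abs_def]] in simp_all)

sublocale p2: poisson_scaling N2 "\<lambda>m. l2 m / u2 m" \<beta>2
  by unfold_locales (use N2_pos l2_pos u2_pos load2_lim s2_lim[unfolded s2_def[abs_def]] in simp_all)

definition "w1 m n = p1.profile m n * adm_weight (k2 m) (N1 m) n"
definition "w2 m n = p2.profile m n * adm_weight (k1 m) (N2 m) n"

lemma w2_nonneg: "0 \<le> w2 m n"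
  by (simp add: w2_def p2.profile_nonneg adm_weight_nonneg)

lemma M1_tendsto: "(\<lambda>m. (real (M1 m) - real (N1 m)) / s1 m) \<longlonglongrightarrow> c1"
proof -
  have "(\<lambda>m. k2 m / s1 m) = (\<lambda>m. (k2 m / s2 m) / r)"
    by (rule ext) (simp add: s1_eq_r_s2 divide_divide_eq_left mult.commute)
  moreover have "(\<lambda>m. (k2 m / s2 m) / r) \<longlonglongrightarrow> \<gamma>2 / r"
    using k2_lim r_pos by (intro tendsto_divide tendsto_const) (simp_all add: s2_def)
  moreover have "\<gamma>2 / r = c1" using alpha1_pos alpha2_pos by (simp add: c1_def r_def real_sqrt_divide)
  ultimately have "(\<lambda>m. real_of_int \<lfloor>k2 m\<rfloor> / s1 m) \<longlonglongrightarrow> c1"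
    using floor_div_tendsto[OF s1_lim s1_pos] by simp
  moreover have "real (M1 m) - real (N1 m) = real_of_int \<lfloor>k2 m\<rfloor>" for m
    using k2_nonneg[of m] by (simp add: M1_def)
  ultimately show ?thesis by simp
qed

lemma overflow_bound2_tendsto: "(\<lambda>m. (real (N2 m + nat \<lfloor>k1 m\<rfloor>) - real (N2 m)) / s2 m) \<longlonglongrightarrow> c2"
proof -
  have "(\<lambda>m. k1 m / s2 m) = (\<lambda>m. (k1 m / s1 m) * r)"
    by (rule ext) (use s2_pos r_pos in \<open>simp add: s1_eq_r_s2\<close>)
  moreover have "(\<lambda>m. (k1 m / s1 m) * r) \<longlonglongrightarrow> \<gamma>1 * r"
    using k1_lim by (intro tendsto_mult tendsto_const) (simp_all add: s1_def)
  ultimately have "(\<lambda>m. real_of_int \<lfloor>k1 m\<rfloor> / s2 m) \<longlonglongrightarrow> c2"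
    using floor_div_tendsto[OF s2_lim s2_pos] by (simp add: c2_eq mult.commute)
  moreover have "real (N2 m + nat \<lfloor>k1 m\<rfloor>) - real (N2 m) = real_of_int \<lfloor>k1 m\<rfloor>" for m
    using k1_nonneg[of m] by simp
  ultimately show ?thesis by simp
qed

lemma adm_weight1_tendsto:
  assumes "(\<lambda>m. (real (n m) - real (N1 m)) / s1 m) \<longlonglongrightarrow> t" "t \<noteq> c1"
  shows "(\<lambda>m. adm_weight (k2 m) (N1 m) (n m)) \<longlonglongrightarrow> indicator {..c1} t"
proof (rule cutoff_tendsto_indicator[OF s1_lim s1_pos assms(1) M1_tendsto assms(2)])
  show "adm_weight (k2 m) (N1 m) x = 1" if "real x \<le> real (M1 m)" for m x
    using that k2_nonneg[of m] by (simp add: M1_def adm_weight_eq_1)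
  show "adm_weight (k2 m) (N1 m) x = 0" if "real (M1 m) + 2 \<le> real x" for m x
  proof -
    have "real (M1 m + 2) \<le> real x" using that by simp
    then show ?thesis using k2_nonneg[of m] by (simp only: of_nat_le_iff M1_def adm_weight_eq_0)
  qed
qed

lemma adm_weight2_tendsto:
  assumes "(\<lambda>m. (real (n m) - real (N2 m)) / s2 m) \<longlonglongrightarrow> t" "t \<noteq> c2"
  shows "(\<lambda>m. adm_weight (k1 m) (N2 m) (n m)) \<longlonglongrightarrow> indicator {..c2} t"
proof (rule cutoff_tendsto_indicator[OF s2_lim s2_pos assms(1) overflow_bound2_tendsto assms(2)])
  show "adm_weight (k1 m) (N2 m) x = 1" if "real x \<le> real (N2 m + nat \<lfloor>k1 m\<rfloor>)" for m x
    using that k1_nonneg[of m] by (simp add: adm_weight_eq_1)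
  show "adm_weight (k1 m) (N2 m) x = 0" if "real (N2 m + nat \<lfloor>k1 m\<rfloor>) + 2 \<le> real x" for m x
  proof -
    have "real (N2 m + nat \<lfloor>k1 m\<rfloor> + 2) \<le> real x" using that by simp
    then show ?thesis using k1_nonneg[of m] by (simp only: of_nat_le_iff adm_weight_eq_0)
  qed
qed

lemma sum_w2_tendsto:
  fixes b :: "nat \<Rightarrow> nat"
  assumes b: "(\<lambda>m. (real (b m) - real (N2 m)) / s2 m) \<longlonglongrightarrow> d"
  shows "(\<lambda>m. (\<Sum>n\<le>b m. w2 m n) / s2 m) \<longlonglongrightarrow> Phi (min c2 d - \<beta>2)"
proof -
  define g where "g m n = adm_weight (k1 m) (N2 m) n * of_bool (n \<le> b m)" for m n
  have "(\<lambda>m. (\<Sum>n\<le>b m. p2.profile m n * g m n) / sqrt (real (N2 m)))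
      \<longlonglongrightarrow> (LINT t|lborel. std_normal_density (t - \<beta>2) * (indicator {..c2} t * indicator {..d} t))"
  proof (rule p2.sum_profile_tendsto_integral[where E = "{c2, d}" and K = 1])
    show "b m < n \<Longrightarrow> g m n = 0" for m n by (simp add: g_def)
    show "eventually (\<lambda>m. \<forall>n. \<bar>g m n\<bar> \<le> 1) sequentially"
      using adm_weight_nonneg adm_weight_le_1 by (simp add: g_def)
    fix n t assume t: "t \<notin> {c2, d}"
      and n: "(\<lambda>m. (real (n m) - real (N2 m)) / sqrt (real (N2 m))) \<longlonglongrightarrow> t"
    then have n': "(\<lambda>m. (real (n m) - real (N2 m)) / s2 m) \<longlonglongrightarrow> t" by (simp add: s2_def)
    have "(\<lambda>m. of_bool (n m \<le> b m) :: real) \<longlonglongrightarrow> indicator {..d} t"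
      by (rule cutoff_tendsto_indicator[OF s2_lim s2_pos n' b, where ch = "\<lambda>m x. of_bool (x \<le> b m)"])
        (use t in auto)
    then show "(\<lambda>m. g m (n m)) \<longlonglongrightarrow> indicator {..c2} t * indicator {..d} t"
      unfolding g_def using t by (intro tendsto_mult adm_weight2_tendsto[OF n']) auto
  qed auto
  moreover have "(\<Sum>n\<le>b m. p2.profile m n * g m n) = (\<Sum>n\<le>b m. w2 m n)" for m
    by (rule sum.cong) (auto simp: g_def w2_def)
  ultimately show ?thesis
    unfolding indicator_atMost_mult Phi_eq_integral by (simp add: s2_def)
qed

lemma sum_w2_bounded: "\<exists>K. \<forall>m n. (\<Sum>n'\<le>n. w2 m n') / s2 m \<le> K"
proof -
  define B where "B m = N2 m + nat \<lfloor>k1 m\<rfloor> + 1" for m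
  have "(\<lambda>m. (real (B m) - real (N2 m)) / s2 m) \<longlonglongrightarrow> c2 + 0"
  proof -
    have "(real (B m) - real (N2 m)) / s2 m = (real (N2 m + nat \<lfloor>k1 m\<rfloor>) - real (N2 m)) / s2 m + 1 / s2 m" for m
      by (simp add: B_def add_divide_distrib)
    then show ?thesis by (simp only:) (intro tendsto_add overflow_bound2_tendsto inverse_s2_tendsto_0)
  qed
  then have "convergent (\<lambda>m. (\<Sum>n\<le>B m. w2 m n) / s2 m)"
    using sum_w2_tendsto by (auto simp: convergent_def)
  then have "Bseq (\<lambda>m. (\<Sum>n\<le>B m. w2 m n) / s2 m)" by (rule convergent_imp_Bseq)
  then obtain K where K: "\<And>m. norm ((\<Sum>n\<le>B m. w2 m n) / s2 m) \<le> K"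
    unfolding Bseq_def by blast
  have "(\<Sum>n'\<le>n. w2 m n') / s2 m \<le> K" for m n
  proof -
    have "(\<Sum>n'\<le>n. w2 m n') \<le> (\<Sum>n'\<le>B m. w2 m n')"
    proof (rule sum_atMost_le_of_zero_beyond)
      show "w2 m n' = 0" if "B m < n'" for n'
        using that k1_nonneg[of m] by (simp add: w2_def B_def adm_weight_eq_0)
    qed (rule w2_nonneg)
    then have "(\<Sum>n'\<le>n. w2 m n') / s2 m \<le> (\<Sum>n'\<le>B m. w2 m n') / s2 m"
      using s2_pos[of m] by (intro divide_right_mono) auto
    also have "\<dots> \<le> K" using order_trans[OF abs_ge_self K[of m, unfolded real_norm_def]] .
    finally show ?thesis .
  qed
  then show ?thesis by blast
qed

lemma eventually_le_T:
  assumes "(\<lambda>m. (real (n m) - real (N1 m)) / s1 m) \<longlonglongrightarrow> t"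
  shows "eventually (\<lambda>m. n m \<le> T m) sequentially"
proof -
  have "filterlim (\<lambda>m. - ((real (n m) - real (N1 m)) / s1 m) + real (N2 m) / s1 m) at_top sequentially"
    by (rule filterlim_tendsto_add_at_top[OF tendsto_minus[OF assms] N2_div_s1_lim])
  then have "eventually (\<lambda>m. 0 \<le> - ((real (n m) - real (N1 m)) / s1 m) + real (N2 m) / s1 m) sequentially"
    by (rule filterlim_at_top[THEN iffD1, rule_format])
  then show ?thesis
  proof (rule eventually_mono)
    fix m assume "0 \<le> - ((real (n m) - real (N1 m)) / s1 m) + real (N2 m) / s1 m"
    then have "0 \<le> (real (N2 m) - (real (n m) - real (N1 m))) / s1 m" by (simp add: diff_divide_distrib)
    then show "n m \<le> T m" using s1_pos[of m] by (simp add: T_def zero_le_divide_iff)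
  qed
qed

lemma complement_tendsto:
  assumes n: "(\<lambda>m. (real (n m) - real (N1 m)) / s1 m) \<longlonglongrightarrow> t"
  shows "(\<lambda>m. (real (T m - n m) - real (N2 m)) / s2 m) \<longlonglongrightarrow> - r * t"
proof -
  have "(\<lambda>m. - r * ((real (n m) - real (N1 m)) / s1 m)) \<longlonglongrightarrow> - r * t"
    by (intro tendsto_mult tendsto_const n)
  moreover have "eventually (\<lambda>m. - r * ((real (n m) - real (N1 m)) / s1 m)
      = (real (T m - n m) - real (N2 m)) / s2 m) sequentially"
    using eventually_le_T[OF n]
  proof (rule eventually_mono)
    fix m assume "n m \<le> T m"
    then have e: "real (T m - n m) - real (N2 m) = real (N1 m) - real (n m)" by (simp add: T_def of_nat_diff)
    have "- r * ((real (n m) - real (N1 m)) / s1 m) = (real (N1 m) - real (n m)) / s2 m"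
      unfolding s1_eq_r_s2 using r_pos s2_pos[of m] by (simp add: field_simps)
    then show "- r * ((real (n m) - real (N1 m)) / s1 m) = (real (T m - n m) - real (N2 m)) / s2 m"
      unfolding e .
  qed
  ultimately show ?thesis by (rule Lim_transform_eventually)
qed

definition "total_mass m = (\<Sum>n\<le>T m. w1 m n * (\<Sum>n'\<le>T m - n. w2 m n'))"
definition "full_mass m = (\<Sum>n\<le>T m. w1 m n * w2 m (T m - n))"
definition "bound_mass m =
  (\<Sum>n\<le>T m. w1 m n * (1 - adm_prob (k2 m) (N1 m) n) * (\<Sum>n'<T m - n. w2 m n'))"

lemma total_mass_tendsto:
  "(\<lambda>m. total_mass m / (s1 m * s2 m))
    \<longlonglongrightarrow> (LINT t|lborel. std_normal_density (t - \<beta>1) * (indicator {..c1} t * Phi (min c2 (- r * t) - \<beta>2)))"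
proof -
  obtain K where K: "\<And>m n. (\<Sum>n'\<le>n. w2 m n') / s2 m \<le> K" using sum_w2_bounded by blast
  define F where "F m n = (\<Sum>n'\<le>T m - n. w2 m n') / s2 m" for m n
  define g where "g m n = adm_weight (k2 m) (N1 m) n * of_bool (n \<le> T m) * F m n" for m n
  have F_nonneg: "0 \<le> F m n" for m n
    unfolding F_def using w2_nonneg s2_pos[of m] by (intro divide_nonneg_pos sum_nonneg) auto
  have "(\<lambda>m. (\<Sum>n\<le>T m. p1.profile m n * g m n) / sqrt (real (N1 m)))
      \<longlonglongrightarrow> (LINT t|lborel. std_normal_density (t - \<beta>1) * (indicator {..c1} t * Phi (min c2 (- r * t) - \<beta>2)))"
  proof (rule p1.sum_profile_tendsto_integral[where E = "{c1}" and K = K])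
    show "T m < n \<Longrightarrow> g m n = 0" for m n by (simp add: g_def)
    show "eventually (\<lambda>m. \<forall>n. \<bar>g m n\<bar> \<le> K) sequentially"
    proof (intro always_eventually allI)
      fix m n
      have "0 \<le> adm_weight (k2 m) (N1 m) n * of_bool (n \<le> T m)" "adm_weight (k2 m) (N1 m) n * of_bool (n \<le> T m) \<le> 1"
        using adm_weight_nonneg adm_weight_le_1 by auto
      then have "\<bar>g m n\<bar> \<le> F m n"
        using F_nonneg[of m n] unfolding g_def by (simp add: abs_mult mult_left_le_one_le)
      also have "F m n \<le> K" unfolding F_def by (rule K)
      finally show "\<bar>g m n\<bar> \<le> K" .
    qed
    fix n t assume t: "t \<notin> {c1}"
      and n: "(\<lambda>m. (real (n m) - real (N1 m)) / sqrt (real (N1 m))) \<longlonglongrightarrow> t"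
    then have n': "(\<lambda>m. (real (n m) - real (N1 m)) / s1 m) \<longlonglongrightarrow> t" by (simp add: s1_def)
    have "(\<lambda>m. of_bool (n m \<le> T m) :: real) \<longlonglongrightarrow> 1"
      using eventually_le_T[OF n'] by (intro tendsto_eventually) (auto elim: eventually_mono)
    then have "(\<lambda>m. g m (n m)) \<longlonglongrightarrow> indicator {..c1} t * 1 * Phi (min c2 (- r * t) - \<beta>2)"
      unfolding g_def F_def using t
      by (intro tendsto_mult adm_weight1_tendsto[OF n'] sum_w2_tendsto[OF complement_tendsto[OF n']]) auto
    then show "(\<lambda>m. g m (n m)) \<longlonglongrightarrow> indicator {..c1} t * Phi (min c2 (- r * t) - \<beta>2)" by simp
  qed auto
  moreover have "(\<Sum>n\<le>T m. p1.profile m n * g m n) / sqrt (real (N1 m)) = total_mass m / (s1 m * s2 m)" for m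
  proof -
    have "(\<Sum>n\<le>T m. p1.profile m n * g m n) = (\<Sum>n\<le>T m. w1 m n * (\<Sum>n'\<le>T m - n. w2 m n')) / s2 m"
      unfolding sum_divide_distrib by (rule sum.cong) (auto simp: g_def F_def w1_def)
    then show ?thesis by (simp add: total_mass_def s1_def mult.commute)
  qed
  ultimately show ?thesis by simp
qed

lemma full_mass_tendsto:
  "(\<lambda>m. full_mass m / s1 m) \<longlonglongrightarrow> (LINT t|lborel. std_normal_density (t - \<beta>1)
      * (indicator {..c1} t * (std_normal_density (- r * t - \<beta>2) * indicator {..c2} (- r * t))))"
proof -
  obtain D where D: "eventually (\<lambda>m. \<forall>n. p2.profile m n \<le> D) sequentially"
    using p2.profile_bounded by blast
  define g where "g m n = adm_weight (k2 m) (N1 m) n * of_bool (n \<le> T m) * w2 m (T m - n)" for m n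
  have "(\<lambda>m. (\<Sum>n\<le>T m. p1.profile m n * g m n) / sqrt (real (N1 m)))
      \<longlonglongrightarrow> (LINT t|lborel. std_normal_density (t - \<beta>1)
            * (indicator {..c1} t * (std_normal_density (- r * t - \<beta>2) * indicator {..c2} (- r * t))))"
  proof (rule p1.sum_profile_tendsto_integral[where E = "{c1, - c2 / r}" and K = D])
    show "T m < n \<Longrightarrow> g m n = 0" for m n by (simp add: g_def)
    show "eventually (\<lambda>m. \<forall>n. \<bar>g m n\<bar> \<le> D) sequentially"
      using D
    proof (rule eventually_mono, intro allI)
      fix m n assume D: "\<forall>n. p2.profile m n \<le> D"
      have "0 \<le> adm_weight (k2 m) (N1 m) n * of_bool (n \<le> T m)" "adm_weight (k2 m) (N1 m) n * of_bool (n \<le> T m) \<le> 1"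
        using adm_weight_nonneg adm_weight_le_1 by auto
      then have "\<bar>g m n\<bar> \<le> w2 m (T m - n)"
        using w2_nonneg[of m "T m - n"] unfolding g_def by (simp add: abs_mult mult_left_le_one_le)
      also have "\<dots> \<le> p2.profile m (T m - n)"
        unfolding w2_def using p2.profile_nonneg adm_weight_le_1 by (simp add: mult_left_le)
      also have "\<dots> \<le> D" using D by blast
      finally show "\<bar>g m n\<bar> \<le> D" .
    qed
    fix n t assume t: "t \<notin> {c1, - c2 / r}"
      and n: "(\<lambda>m. (real (n m) - real (N1 m)) / sqrt (real (N1 m))) \<longlonglongrightarrow> t"
    then have n': "(\<lambda>m. (real (n m) - real (N1 m)) / s1 m) \<longlonglongrightarrow> t" by (simp add: s1_def)
    have c: "(\<lambda>m. (real (T m - n m) - real (N2 m)) / s2 m) \<longlonglongrightarrow> - r * t"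
      by (rule complement_tendsto[OF n'])
    have "- r * t \<noteq> c2" using t r_pos by (auto simp: field_simps)
    moreover have "(\<lambda>m. of_bool (n m \<le> T m) :: real) \<longlonglongrightarrow> 1"
      using eventually_le_T[OF n'] by (intro tendsto_eventually) (auto elim: eventually_mono)
    moreover have "(\<lambda>m. p2.profile m (T m - n m)) \<longlonglongrightarrow> std_normal_density (- r * t - \<beta>2)"
      using c by (intro p2.profile_tendsto) (simp add: s2_def)
    ultimately have "(\<lambda>m. g m (n m)) \<longlonglongrightarrow>
        indicator {..c1} t * 1 * (std_normal_density (- r * t - \<beta>2) * indicator {..c2} (- r * t))"
      unfolding g_def w2_def using t
      by (intro tendsto_mult adm_weight1_tendsto[OF n'] adm_weight2_tendsto[OF c]) auto
    then show "(\<lambda>m. g m (n m)) \<longlonglongrightarrow>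
        indicator {..c1} t * (std_normal_density (- r * t - \<beta>2) * indicator {..c2} (- r * t))" by simp
  qed auto
  moreover have "(\<Sum>n\<le>T m. p1.profile m n * g m n) = full_mass m" for m
    unfolding full_mass_def by (rule sum.cong) (auto simp: g_def w1_def)
  ultimately show ?thesis by (simp add: s1_def)
qed

lemma adm_weight_mult_blocking:
  "adm_weight (k2 m) (N1 m) n * (1 - adm_prob (k2 m) (N1 m) n)
    = (if n = M1 m then 1 - frac (k2 m) else if n = Suc (M1 m) then frac (k2 m) else 0)"
  using k2_nonneg[of m] by (auto simp: M1_def adm_weight_eq adm_prob_nat)

lemma floor_k2_tendsto: "(\<lambda>m. real_of_int \<lfloor>k2 m\<rfloor> / s2 m) \<longlonglongrightarrow> \<gamma>2"
  by (rule floor_div_tendsto[OF s2_lim s2_pos]) (use k2_lim in \<open>simp add: s2_def\<close>)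

lemma eventually_M1_le_T: "eventually (\<lambda>m. M1 m + 2 \<le> T m) sequentially"
proof -
  have "(\<lambda>m. - ((real_of_int \<lfloor>k2 m\<rfloor> + 2) / s2 m)) \<longlonglongrightarrow> - (\<gamma>2 + 2 * 0)"
    unfolding add_divide_distrib
    by (intro tendsto_minus tendsto_add floor_k2_tendsto)
      (use tendsto_mult_right_zero[OF inverse_s2_tendsto_0, of 2] in simp)
  then have "filterlim (\<lambda>m. - ((real_of_int \<lfloor>k2 m\<rfloor> + 2) / s2 m) + real (N2 m) / s2 m) at_top sequentially"
    by (rule filterlim_tendsto_add_at_top[OF _ N2_div_s2_lim])
  then have "eventually (\<lambda>m. 0 \<le> - ((real_of_int \<lfloor>k2 m\<rfloor> + 2) / s2 m) + real (N2 m) / s2 m) sequentially"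
    by (rule filterlim_at_top[THEN iffD1, rule_format])
  then show ?thesis
  proof (rule eventually_mono)
    fix m assume "0 \<le> - ((real_of_int \<lfloor>k2 m\<rfloor> + 2) / s2 m) + real (N2 m) / s2 m"
    then have "0 \<le> (real (N2 m) - (real_of_int \<lfloor>k2 m\<rfloor> + 2)) / s2 m" by (simp add: diff_divide_distrib)
    then have "real_of_int \<lfloor>k2 m\<rfloor> + 2 \<le> real (N2 m)" using s2_pos[of m] by (simp add: zero_le_divide_iff)
    then have "nat \<lfloor>k2 m\<rfloor> + 2 \<le> N2 m" using k2_nonneg[of m] by linarith
    then show "M1 m + 2 \<le> T m" by (simp add: M1_def T_def)
  qed
qed

lemma sum_w2_below_bound_tendsto:
  assumes j: "j \<le> 1"
  shows "(\<lambda>m. (\<Sum>n<T m - (M1 m + j). w2 m n) / s2 m) \<longlonglongrightarrow> Phi (- \<gamma>2 - \<beta>2)"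
proof -
  define b where "b m = T m - (M1 m + j) - 1" for m
  have "(\<lambda>m. - (real_of_int \<lfloor>k2 m\<rfloor> / s2 m) - (real j + 1) * (1 / s2 m)) \<longlonglongrightarrow> - \<gamma>2 - (real j + 1) * 0"
    by (intro tendsto_diff tendsto_minus tendsto_mult floor_k2_tendsto inverse_s2_tendsto_0 tendsto_const)
  moreover have "eventually (\<lambda>m. - (real_of_int \<lfloor>k2 m\<rfloor> / s2 m) - (real j + 1) * (1 / s2 m)
      = (real (b m) - real (N2 m)) / s2 m) sequentially"
    using eventually_M1_le_T
  proof (rule eventually_mono)
    fix m assume h: "M1 m + 2 \<le> T m"
    have "real (b m) = real (T m) - real (M1 m) - real j - 1" using h j by (simp add: b_def of_nat_diff)
    also have "\<dots> = real (N2 m) - real_of_int \<lfloor>k2 m\<rfloor> - real j - 1"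
      using k2_nonneg[of m] by (simp add: T_def M1_def)
    finally show "- (real_of_int \<lfloor>k2 m\<rfloor> / s2 m) - (real j + 1) * (1 / s2 m) = (real (b m) - real (N2 m)) / s2 m"
      by (simp add: diff_divide_distrib add_divide_distrib)
  qed
  ultimately have "(\<lambda>m. (real (b m) - real (N2 m)) / s2 m) \<longlonglongrightarrow> - \<gamma>2"
    by (simp add: Lim_transform_eventually)
  then have "(\<lambda>m. (\<Sum>n\<le>b m. w2 m n) / s2 m) \<longlonglongrightarrow> Phi (min c2 (- \<gamma>2) - \<beta>2)"
    by (rule sum_w2_tendsto)
  moreover have "min c2 (- \<gamma>2) = - \<gamma>2" using c2_nonneg gamma2_nonneg by (auto simp: min_def)
  moreover have "eventually (\<lambda>m. (\<Sum>n\<le>b m. w2 m n) / s2 m = (\<Sum>n<T m - (M1 m + j). w2 m n) / s2 m) sequentially"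
    using eventually_M1_le_T
  proof (rule eventually_mono)
    fix m assume "M1 m + 2 \<le> T m"
    then have "T m - (M1 m + j) = Suc (b m)" using j by (simp add: b_def)
    then show "(\<Sum>n\<le>b m. w2 m n) / s2 m = (\<Sum>n<T m - (M1 m + j). w2 m n) / s2 m"
      by (simp add: lessThan_Suc_atMost)
  qed
  ultimately show ?thesis by (simp add: Lim_transform_eventually)
qed

lemma bound_mass_eq:
  assumes "M1 m + 2 \<le> T m"
  shows "bound_mass m = p1.profile m (M1 m) * (1 - frac (k2 m)) * (\<Sum>n<T m - M1 m. w2 m n)
    + p1.profile m (Suc (M1 m)) * frac (k2 m) * (\<Sum>n<T m - Suc (M1 m). w2 m n)"
proof -
  have "bound_mass m = (\<Sum>n\<le>T m.
        (if n = M1 m then p1.profile m (M1 m) * (1 - frac (k2 m)) * (\<Sum>n'<T m - M1 m. w2 m n') else 0)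
      + (if n = Suc (M1 m) then p1.profile m (Suc (M1 m)) * frac (k2 m) * (\<Sum>n'<T m - Suc (M1 m). w2 m n') else 0))"
    unfolding bound_mass_def
  proof (rule sum.cong[OF refl])
    fix n
    have "w1 m n * (1 - adm_prob (k2 m) (N1 m) n)
        = p1.profile m n * (adm_weight (k2 m) (N1 m) n * (1 - adm_prob (k2 m) (N1 m) n))"
      by (simp add: w1_def)
    then show "w1 m n * (1 - adm_prob (k2 m) (N1 m) n) * (\<Sum>n'<T m - n. w2 m n')
        = (if n = M1 m then p1.profile m (M1 m) * (1 - frac (k2 m)) * (\<Sum>n'<T m - M1 m. w2 m n') else 0)
          + (if n = Suc (M1 m) then p1.profile m (Suc (M1 m)) * frac (k2 m) * (\<Sum>n'<T m - Suc (M1 m). w2 m n') else 0)"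
      unfolding adm_weight_mult_blocking by auto
  qed
  also have "\<dots> = p1.profile m (M1 m) * (1 - frac (k2 m)) * (\<Sum>n<T m - M1 m. w2 m n)
      + p1.profile m (Suc (M1 m)) * frac (k2 m) * (\<Sum>n<T m - Suc (M1 m). w2 m n)"
    using assms by (simp add: sum.distrib)
  finally show ?thesis .
qed

lemma bound_mass_tendsto:
  "(\<lambda>m. bound_mass m / s2 m) \<longlonglongrightarrow> std_normal_density (c1 - \<beta>1) * Phi (- \<gamma>2 - \<beta>2)"
proof -
  define L where "L = std_normal_density (c1 - \<beta>1) * Phi (- \<gamma>2 - \<beta>2)"
  define f where "f m = frac (k2 m)" for m
  define X where "X m = p1.profile m (M1 m) * ((\<Sum>n<T m - M1 m. w2 m n) / s2 m)" for m
  define Y where "Y m = p1.profile m (Suc (M1 m)) * ((\<Sum>n<T m - Suc (M1 m). w2 m n) / s2 m)" for m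
  have M: "(\<lambda>m. (real (M1 m) - real (N1 m)) / sqrt (real (N1 m))) \<longlonglongrightarrow> c1"
    using M1_tendsto by (simp add: s1_def)
  have "(\<lambda>m. (real (M1 m) - real (N1 m)) / s1 m + 1 / s1 m) \<longlonglongrightarrow> c1 + 0"
    using tendsto_inverse_0_at_top[OF s1_lim] by (intro tendsto_add M1_tendsto) (simp add: divide_inverse)
  then have M_Suc: "(\<lambda>m. (real (Suc (M1 m)) - real (N1 m)) / sqrt (real (N1 m))) \<longlonglongrightarrow> c1"
    by (simp add: add_divide_distrib[symmetric] s1_def add.commute add_diff_eq)
  have X: "X \<longlonglongrightarrow> L"
    unfolding X_def L_def using sum_w2_below_bound_tendsto[of 0]
    by (intro tendsto_mult p1.profile_tendsto[OF M]) simp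
  have Y: "Y \<longlonglongrightarrow> L"
    unfolding Y_def L_def using sum_w2_below_bound_tendsto[of 1]
    by (intro tendsto_mult p1.profile_tendsto[OF M_Suc]) simp
  have f01: "0 \<le> f m" "f m \<le> 1" for m unfolding f_def by (simp_all add: frac_ge_0 less_imp_le[OF frac_lt_1])
  have "(\<lambda>m. f m * (Y m - X m)) \<longlonglongrightarrow> 0"
  proof (rule Lim_null_comparison)
    show "eventually (\<lambda>m. norm (f m * (Y m - X m)) \<le> \<bar>Y m - X m\<bar>) sequentially"
      using f01 by (intro always_eventually allI) (simp add: abs_mult mult_left_le_one_le)
    show "(\<lambda>m. \<bar>Y m - X m\<bar>) \<longlonglongrightarrow> 0" using tendsto_rabs[OF tendsto_diff[OF Y X]] by simp
  qed
  then have "(\<lambda>m. X m + f m * (Y m - X m)) \<longlonglongrightarrow> L" using tendsto_add[OF X] by fastforce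
  moreover have "eventually (\<lambda>m. X m + f m * (Y m - X m) = bound_mass m / s2 m) sequentially"
    using eventually_M1_le_T
  proof (rule eventually_mono)
    fix m assume "M1 m + 2 \<le> T m"
    from bound_mass_eq[OF this] show "X m + f m * (Y m - X m) = bound_mass m / s2 m"
      unfolding X_def Y_def f_def using s2_pos[of m] by (simp add: field_simps)
  qed
  ultimately show ?thesis unfolding L_def by (rule Lim_transform_eventually)
qed

definition "overlap_integral = (LBINT x:{- \<gamma>1 * sqrt \<alpha>1 .. \<gamma>2 * sqrt \<alpha>2}.
    std_normal_density (x / sqrt \<alpha>1 - \<beta>1) * std_normal_density (- x / sqrt \<alpha>2 - \<beta>2))"

definition "norm_const = Phi (\<gamma>1 * sqrt (\<alpha>1 / \<alpha>2) - \<beta>2) * Phi (- \<gamma>1 - \<beta>1)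
    + (LBINT x:{- \<gamma>1 * sqrt \<alpha>1 .. \<gamma>2 * sqrt \<alpha>2}.
         std_normal_density (x / sqrt \<alpha>1 - \<beta>1) * Phi (- x / sqrt \<alpha>2 - \<beta>2)) / sqrt \<alpha>1"

definition "block_const1 = std_normal_density (\<gamma>2 * sqrt (\<alpha>2 / \<alpha>1) - \<beta>1) / sqrt \<alpha>1 * Phi (- \<gamma>2 - \<beta>2)
    + overlap_integral / sqrt (\<alpha>1 * \<alpha>2)"

definition "block_const2 = std_normal_density (\<gamma>1 * sqrt (\<alpha>1 / \<alpha>2) - \<beta>2) / sqrt \<alpha>2 * Phi (- \<gamma>1 - \<beta>1)
    + overlap_integral / sqrt (\<alpha>1 * \<alpha>2)"

lemma neg_r_rescaled: "- r * (x / sqrt \<alpha>1) = - x / sqrt \<alpha>2"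
  unfolding r_def using alpha1_pos alpha2_pos by (simp add: real_sqrt_divide)

lemma neg_r_le_c2_iff: "- r * t \<le> c2 \<longleftrightarrow> - \<gamma>1 \<le> t"
  using mult_le_cancel_left_pos[OF r_pos, of "- t" \<gamma>1] by (auto simp: c2_eq)

lemma integral_indicator_rescale:
  "(LINT t|lborel. indicator {- \<gamma>1..c1} t * F t)
    = (LBINT x:{- \<gamma>1 * sqrt \<alpha>1 .. \<gamma>2 * sqrt \<alpha>2}. F (x / sqrt \<alpha>1)) / sqrt \<alpha>1"
proof -
  have sa: "0 < sqrt \<alpha>1" using alpha1_pos by simp
  have "c1 * sqrt \<alpha>1 = \<gamma>2 * sqrt \<alpha>2" unfolding c1_def using alpha1_pos alpha2_pos by (simp add: real_sqrt_divide)
  then have "(- \<gamma>1 \<le> x / sqrt \<alpha>1 \<and> x / sqrt \<alpha>1 \<le> c1) \<longleftrightarrow> (- \<gamma>1 * sqrt \<alpha>1 \<le> x \<and> x \<le> \<gamma>2 * sqrt \<alpha>2)" for x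
    using sa by (auto simp: pos_le_divide_eq pos_divide_le_eq)
  then have "indicator {- \<gamma>1..c1} (x / sqrt \<alpha>1) = (indicator {- \<gamma>1 * sqrt \<alpha>1 .. \<gamma>2 * sqrt \<alpha>2} x :: real)" for x
    by (simp add: indicator_def)
  then show ?thesis
    unfolding integral_rescale_sqrt[OF alpha1_pos, of "\<lambda>t. indicator {- \<gamma>1..c1} t * F t"] set_lebesgue_integral_def
    by simp
qed

lemma integral_total_eq:
  "(LINT t|lborel. std_normal_density (t - \<beta>1) * (indicator {..c1} t * Phi (min c2 (- r * t) - \<beta>2))) = norm_const"
proof -
  define A where "A t = std_normal_density (t - \<beta>1) * (indicator {..<- \<gamma>1} t * Phi (c2 - \<beta>2))" for t
  define B where "B t = std_normal_density (t - \<beta>1) * (indicator {- \<gamma>1..c1} t * Phi (- r * t - \<beta>2))" for t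
  have split: "std_normal_density (t - \<beta>1) * (indicator {..c1} t * Phi (min c2 (- r * t) - \<beta>2)) = A t + B t" for t
  proof (cases "t < - \<gamma>1")
    case True
    then have "\<not> - r * t \<le> c2" "t \<le> c1" using neg_r_le_c2_iff c1_nonneg gamma1_nonneg by auto
    then show ?thesis using True by (simp add: A_def B_def indicator_def min_def)
  next
    case False
    then have "- r * t \<le> c2" using neg_r_le_c2_iff by simp
    then show ?thesis using False by (simp add: A_def B_def indicator_def min_def)
  qed
  have bounded: "\<bar>indicator S t * Phi x\<bar> \<le> 1" for S t x
    using Phi_pos[of x] Phi_le_1[of x] by (simp add: indicator_def)
  have "integrable lborel A"
    unfolding A_def by (rule integrable_std_normal_density_mult_bounded[where C = 1]) (measurable, rule bounded)
  moreover have "integrable lborel B"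
    unfolding B_def by (rule integrable_std_normal_density_mult_bounded[where C = 1]) (measurable, rule bounded)
  moreover have "(LINT t|lborel. A t) = Phi (c2 - \<beta>2) * Phi (- \<gamma>1 - \<beta>1)"
    unfolding A_def mult.assoc[symmetric] integral_mult_left_zero Phi_eq_integral_less by (rule mult.commute)
  moreover have "(LINT t|lborel. B t) = (LBINT x:{- \<gamma>1 * sqrt \<alpha>1 .. \<gamma>2 * sqrt \<alpha>2}.
          std_normal_density (x / sqrt \<alpha>1 - \<beta>1) * Phi (- x / sqrt \<alpha>2 - \<beta>2)) / sqrt \<alpha>1"
  proof -
    have eq: "B t = indicator {- \<gamma>1..c1} t * (std_normal_density (t - \<beta>1) * Phi (- r * t - \<beta>2))" for t
      by (simp add: B_def)
    show ?thesis unfolding eq integral_indicator_rescale neg_r_rescaled ..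
  qed
  ultimately have "(LINT t|lborel. A t + B t) = norm_const"
    unfolding norm_const_def c2_def by (simp add: Bochner_Integration.integral_add)
  then show ?thesis unfolding split .
qed

lemma integral_full_eq:
  "(LINT t|lborel. std_normal_density (t - \<beta>1)
      * (indicator {..c1} t * (std_normal_density (- r * t - \<beta>2) * indicator {..c2} (- r * t))))
    = overlap_integral / sqrt \<alpha>1"
proof -
  have eq: "std_normal_density (t - \<beta>1) * (indicator {..c1} t * (std_normal_density (- r * t - \<beta>2) * indicator {..c2} (- r * t)))
      = indicator {- \<gamma>1..c1} t * (std_normal_density (t - \<beta>1) * std_normal_density (- r * t - \<beta>2))" for t
    using neg_r_le_c2_iff[of t] by (auto simp: indicator_def)
  show ?thesis
    unfolding eq integral_indicator_rescale neg_r_rescaled overlap_integral_def ..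
qed

lemma norm_const_pos: "0 < norm_const"
proof -
  have "0 \<le> (LBINT x:{- \<gamma>1 * sqrt \<alpha>1 .. \<gamma>2 * sqrt \<alpha>2}.
                  std_normal_density (x / sqrt \<alpha>1 - \<beta>1) * Phi (- x / sqrt \<alpha>2 - \<beta>2))"
    unfolding set_lebesgue_integral_def
    by (rule integral_nonneg_AE) (auto simp: indicator_def less_imp_le[OF Phi_pos])
  then show ?thesis unfolding norm_const_def using Phi_pos alpha1_pos
    by (intro add_pos_nonneg mult_pos_pos divide_nonneg_pos) auto
qed

lemma block_const1_pos: "0 < block_const1"
proof -
  have "0 \<le> overlap_integral" unfolding overlap_integral_def set_lebesgue_integral_def
    by (rule integral_nonneg_AE) (auto simp: indicator_def)
  moreover have "0 < std_normal_density (\<gamma>2 * sqrt (\<alpha>2 / \<alpha>1) - \<beta>1)" by (simp add: std_normal_density_def)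
  ultimately show ?thesis unfolding block_const1_def using Phi_pos alpha1_pos alpha2_pos
    by (intro add_pos_nonneg mult_pos_pos divide_pos_pos divide_nonneg_pos) auto
qed

lemma class_weight1_eq: "\<exists>E>0. \<forall>n. class_weight (l1 m / u1 m) (k2 m) (N1 m) n = E * w1 m n"
proof -
  define K where "K = sqrt (2 * pi) * exp (\<beta>1\<^sup>2 / 2)"
  have K: "0 < K" by (simp add: K_def)
  have "class_weight (l1 m / u1 m) (k2 m) (N1 m) n = exp (ln_poisson (l1 m / u1 m) (N1 m)) * K * w1 m n" for n
  proof -
    have "class_weight (l1 m / u1 m) (k2 m) (N1 m) n = exp (ln_poisson (l1 m / u1 m) n) * adm_weight (k2 m) (N1 m) n"
      using l1_pos[of m] u1_pos[of m] by (simp add: class_weight_def exp_ln_poisson)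
    then show ?thesis using K by (simp add: w1_def p1.profile_def K_def exp_diff)
  qed
  then show ?thesis using K by (intro exI[of _ "exp (ln_poisson (l1 m / u1 m) (N1 m)) * K"]) auto
qed

lemma class_weight2_eq: "\<exists>E>0. \<forall>n. class_weight (l2 m / u2 m) (k1 m) (N2 m) n = E * w2 m n"
proof -
  define K where "K = sqrt (2 * pi) * exp (\<beta>2\<^sup>2 / 2)"
  have K: "0 < K" by (simp add: K_def)
  have "class_weight (l2 m / u2 m) (k1 m) (N2 m) n = exp (ln_poisson (l2 m / u2 m) (N2 m)) * K * w2 m n" for n
  proof -
    have "class_weight (l2 m / u2 m) (k1 m) (N2 m) n = exp (ln_poisson (l2 m / u2 m) n) * adm_weight (k1 m) (N2 m) n"
      using l2_pos[of m] u2_pos[of m] by (simp add: class_weight_def exp_ln_poisson)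
    then show ?thesis using K by (simp add: w2_def p2.profile_def K_def exp_diff)
  qed
  then show ?thesis using K by (intro exI[of _ "exp (ln_poisson (l2 m / u2 m) (N2 m)) * K"]) auto
qed

lemma B1_bo_eq_masses:
  "B1_bo (N1 m) (N2 m) (k1 m) (k2 m) (l1 m) (l2 m) (u1 m) (u2 m) = (full_mass m + bound_mass m) / total_mass m"
proof -
  obtain E1 where E1: "0 < E1" "\<And>n. class_weight (l1 m / u1 m) (k2 m) (N1 m) n = E1 * w1 m n"
    using class_weight1_eq by blast
  obtain E2 where E2: "0 < E2" "\<And>n. class_weight (l2 m / u2 m) (k1 m) (N2 m) n = E2 * w2 m n"
    using class_weight2_eq by blast
  have "(\<Sum>a\<le>T m. E1 * w1 m a * (E2 * w2 m (T m - a)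
          + (1 - adm_prob (k2 m) (N1 m) a) * (\<Sum>b<T m - a. E2 * w2 m b)))
      = (\<Sum>a\<le>T m. E1 * E2 * (w1 m a * w2 m (T m - a)
          + w1 m a * (1 - adm_prob (k2 m) (N1 m) a) * (\<Sum>b<T m - a. w2 m b)))"
    by (rule sum.cong) (simp_all add: sum_distrib_left[symmetric] algebra_simps)
  also have "\<dots> = E1 * E2 * (full_mass m + bound_mass m)"
    unfolding full_mass_def bound_mass_def by (simp add: sum_distrib_left[symmetric] sum.distrib)
  moreover have "(\<Sum>a\<le>T m. E1 * w1 m a * (\<Sum>b\<le>T m - a. E2 * w2 m b)) = E1 * E2 * total_mass m"
    unfolding total_mass_def by (simp add: sum_distrib_left[symmetric] algebra_simps)
  ultimately show ?thesis
    using E1 E2 unfolding B1_bo_eq[OF l1_pos l2_pos u1_pos u2_pos] E1(2) E2(2) T_def[symmetric] by simp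
qed

lemma B1_bo_tendsto:
  "(\<lambda>m. sqrt (N m) * B1_bo (N1 m) (N2 m) (k1 m) (k2 m) (l1 m) (l2 m) (u1 m) (u2 m)) \<longlonglongrightarrow> block_const1 / norm_const"
proof -
  have Z: "(\<lambda>m. total_mass m / (s1 m * s2 m)) \<longlonglongrightarrow> norm_const"
    using total_mass_tendsto unfolding integral_total_eq .
  have F: "(\<lambda>m. full_mass m / s1 m) \<longlonglongrightarrow> overlap_integral / sqrt \<alpha>1"
    using full_mass_tendsto unfolding integral_full_eq .
  have "(\<lambda>m. (full_mass m / s1 m * sqrt \<alpha>1 + bound_mass m / s2 m * sqrt \<alpha>2)
        / (total_mass m / (s1 m * s2 m) * (sqrt \<alpha>1 * sqrt \<alpha>2)))
      \<longlonglongrightarrow> (overlap_integral / sqrt \<alpha>1 * sqrt \<alpha>1 + std_normal_density (c1 - \<beta>1) * Phi (- \<gamma>2 - \<beta>2) * sqrt \<alpha>2)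
        / (norm_const * (sqrt \<alpha>1 * sqrt \<alpha>2))"
    using norm_const_pos alpha1_pos alpha2_pos by (intro tendsto_intros F Z bound_mass_tendsto) auto
  moreover have "(full_mass m / s1 m * sqrt \<alpha>1 + bound_mass m / s2 m * sqrt \<alpha>2)
        / (total_mass m / (s1 m * s2 m) * (sqrt \<alpha>1 * sqrt \<alpha>2))
      = sqrt (N m) * B1_bo (N1 m) (N2 m) (k1 m) (k2 m) (l1 m) (l2 m) (u1 m) (u2 m)" for m
  proof -
    define q where "q = sqrt (N m)"
    have "0 < q" "0 < sqrt \<alpha>1" "0 < sqrt \<alpha>2" using N_pos[of m] alpha1_pos alpha2_pos by (auto simp: q_def)
    then show ?thesis unfolding B1_bo_eq_masses s1_eq s2_eq q_def[symmetric]
      by (cases "total_mass m = 0") (simp_all add: field_simps)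
  qed
  moreover have "(overlap_integral / sqrt \<alpha>1 * sqrt \<alpha>1 + std_normal_density (c1 - \<beta>1) * Phi (- \<gamma>2 - \<beta>2) * sqrt \<alpha>2)
        / (norm_const * (sqrt \<alpha>1 * sqrt \<alpha>2)) = block_const1 / norm_const"
    unfolding block_const1_def c1_def using alpha1_pos alpha2_pos norm_const_pos
    by (simp add: field_simps real_sqrt_mult)
  ultimately show ?thesis by simp
qed

lemma B1_bo_asymp:
  "(\<lambda>m. B1_bo (N1 m) (N2 m) (k1 m) (k2 m) (l1 m) (l2 m) (u1 m) (u2 m))
    \<sim>[sequentially] (\<lambda>m. 1 / sqrt (N m) * (block_const1 / norm_const))"
  using N_pos B1_bo_tendsto block_const1_pos norm_const_pos by (intro asymp_equiv_of_sqrt_mult_tendsto) auto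

lemma bo_scaling_swap: "bo_scaling \<alpha>2 \<alpha>1 \<beta>2 \<beta>1 \<gamma>2 \<gamma>1 N N2 N1 k2 k1 l2 l1 u2 u1"
  by unfold_locales
    (rule alpha1_pos alpha2_pos gamma1_nonneg gamma2_nonneg N_lim N1_pos N2_pos N1_eq N2_eq
      l1_pos l2_pos u1_pos u2_pos k1_nonneg k2_nonneg load1_lim load2_lim k1_lim k2_lim)+

text \<open>The constant \<open>norm_const\<close> is symmetric in the two providers although its formula is not:
  both it and its mirror image are the limit of the same normalising sum.\<close>

lemma B2_bo_asymp:
  "(\<lambda>m. B2_bo (N1 m) (N2 m) (k1 m) (k2 m) (l1 m) (l2 m) (u1 m) (u2 m))
    \<sim>[sequentially] (\<lambda>m. 1 / sqrt (N m) * (block_const2 / norm_const))"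
proof -
  interpret sw: bo_scaling \<alpha>2 \<alpha>1 \<beta>2 \<beta>1 \<gamma>2 \<gamma>1 N N2 N1 k2 k1 l2 l1 u2 u1
    by (rule bo_scaling_swap)
  have "sw.total_mass m = total_mass m" for m
    using sum_triangle_swap[where g = "w2 m" and f = "w1 m" and T = "T m"]
    by (simp add: sw.total_mass_def total_mass_def sw.T_def T_def sw.w1_def sw.w2_def w1_def w2_def
        add.commute ac_simps)
  moreover have "sw.s1 = s2" "sw.s2 = s1" by (simp_all add: fun_eq_iff sw.s1_def sw.s2_def s1_def s2_def)
  ultimately have "(\<lambda>m. total_mass m / (s1 m * s2 m)) \<longlonglongrightarrow> sw.norm_const"
    using sw.total_mass_tendsto unfolding sw.integral_total_eq by (simp add: mult.commute)
  then have norm: "sw.norm_const = norm_const"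
    using total_mass_tendsto unfolding integral_total_eq by (rule LIMSEQ_unique)
  have "sw.overlap_integral = overlap_integral"
    unfolding sw.overlap_integral_def overlap_integral_def
    by (subst set_integral_reflect) (simp add: mult.commute)
  then have "sw.block_const1 = block_const2"
    unfolding sw.block_const1_def block_const2_def by (simp add: mult.commute)
  moreover have "B2_bo (N1 m) (N2 m) (k1 m) (k2 m) (l1 m) (l2 m) (u1 m) (u2 m)
      = B1_bo (N2 m) (N1 m) (k2 m) (k1 m) (l2 m) (l1 m) (u2 m) (u1 m)" for m
    by (rule B2_bo_swap[OF l1_pos l2_pos u1_pos u2_pos])
  ultimately show ?thesis using sw.B1_bo_asymp norm by simp
qed

end

theorem theorem4:
  fixes \<alpha>1 \<alpha>2 \<beta>1 \<beta>2 \<gamma>1 \<gamma>2 :: real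
    and N :: "nat \<Rightarrow> real"
    and N1 N2 :: "nat \<Rightarrow> nat"
    and k1 k2 l1 l2 u1 u2 :: "nat \<Rightarrow> real"
  assumes "\<alpha>1 > 0" "\<alpha>2 > 0" "\<gamma>1 \<ge> 0" "\<gamma>2 \<ge> 0"
    and "filterlim N at_top sequentially"
    and "\<And>m. N1 m > 0" "\<And>m. N2 m > 0"
    and "\<And>m. real (N1 m) = \<alpha>1 * N m" "\<And>m. real (N2 m) = \<alpha>2 * N m"
    and "\<And>m. l1 m > 0" "\<And>m. l2 m > 0" "\<And>m. u1 m > 0" "\<And>m. u2 m > 0"
    and "\<And>m. 0 \<le> k1 m \<and> k1 m \<le> real (N1 m)"
    and "\<And>m. 0 \<le> k2 m \<and> k2 m \<le> real (N2 m)"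
    and "(\<lambda>m. l1 m / u1 m - real (N1 m) - \<beta>1 * sqrt (real (N1 m))) \<in> o(\<lambda>m. sqrt (real (N1 m)))"
    and "(\<lambda>m. l2 m / u2 m - real (N2 m) - \<beta>2 * sqrt (real (N2 m))) \<in> o(\<lambda>m. sqrt (real (N2 m)))"
    and "(\<lambda>m. k1 m - \<gamma>1 * sqrt (real (N1 m))) \<in> o(\<lambda>m. sqrt (real (N1 m)))"
    and "(\<lambda>m. k2 m - \<gamma>2 * sqrt (real (N2 m))) \<in> o(\<lambda>m. sqrt (real (N2 m)))"
  shows
    "let I = (LBINT x:{- \<gamma>1 * sqrt \<alpha>1 .. \<gamma>2 * sqrt \<alpha>2}.
                std_normal_density (x / sqrt \<alpha>1 - \<beta>1) * std_normal_density (- x / sqrt \<alpha>2 - \<beta>2));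
         A1 = std_normal_density (\<gamma>2 * sqrt (\<alpha>2 / \<alpha>1) - \<beta>1) / sqrt \<alpha>1 * Phi (- \<gamma>2 - \<beta>2)
              + I / sqrt (\<alpha>1 * \<alpha>2);
         A2 = std_normal_density (\<gamma>1 * sqrt (\<alpha>1 / \<alpha>2) - \<beta>2) / sqrt \<alpha>2 * Phi (- \<gamma>1 - \<beta>1)
              + I / sqrt (\<alpha>1 * \<alpha>2);
         G = Phi (\<gamma>1 * sqrt (\<alpha>1 / \<alpha>2) - \<beta>2) * Phi (- \<gamma>1 - \<beta>1)
             + (LBINT x:{- \<gamma>1 * sqrt \<alpha>1 .. \<gamma>2 * sqrt \<alpha>2}.
                  std_normal_density (x / sqrt \<alpha>1 - \<beta>1) * Phi (- x / sqrt \<alpha>2 - \<beta>2)) / sqrt \<alpha>1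
     in (\<lambda>m. B1_bo (N1 m) (N2 m) (k1 m) (k2 m) (l1 m) (l2 m) (u1 m) (u2 m))
          \<sim>[sequentially] (\<lambda>m. 1 / sqrt (N m) * (A1 / G))
      \<and> (\<lambda>m. B2_bo (N1 m) (N2 m) (k1 m) (k2 m) (l1 m) (l2 m) (u1 m) (u2 m))
          \<sim>[sequentially] (\<lambda>m. 1 / sqrt (N m) * (A2 / G))"
proof -
  have sqrt_pos: "0 < sqrt (real (N1 m))" "0 < sqrt (real (N2 m))" for m
    using assms(6,7)[of m] by simp_all
  interpret bo_scaling \<alpha>1 \<alpha>2 \<beta>1 \<beta>2 \<gamma>1 \<gamma>2 N N1 N2 k1 k2 l1 l2 u1 u2
    using assms
      smallo_imp_tendsto_ratio[OF assms(16) sqrt_pos(1)] smallo_imp_tendsto_ratio[OF assms(17) sqrt_pos(2)]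
      smallo_imp_tendsto_ratio[OF assms(18) sqrt_pos(1)] smallo_imp_tendsto_ratio[OF assms(19) sqrt_pos(2)]
    by unfold_locales auto
  show ?thesis
    unfolding Let_def overlap_integral_def[symmetric] block_const1_def[symmetric]
      block_const2_def[symmetric] norm_const_def[symmetric]
    using B1_bo_asymp B2_bo_asymp ..
qed

end
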